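(* Let $n=n_1n_2\cdots n_\ell>2$ with integers $n_i\ge 2$, and let $U=F_{(n_1,\dots,n_\ell)}=F_{n_1}\otimes\cdots\otimes F_{n_\ell}$ (with modes labelled as in the context). Consider the $n$-photon distillation protocol determined by $U$ with input state $\rho^{(n)}(\epsilon)$ (uniform random source model with any fixed $R\ge 1$, or its orthogonal-bad-bits limit). Then the output error rate satisfies $$e_n(\epsilon)=\frac{\epsilon}{n}+O(\epsilon^2)\qquad(\epsilon\to 0,\ n\text{ fixed}).$$ In particular this applies to $U=F_n$ ($n\ge 3$) and to $U=H_n=H^{\otimes r}$ ($n=2^r\ge 4$, $H$ the $2\times 2$ Hadamard matrix).
   Context: For an integer $m\ge 2$, $F_m=\frac{1}{\sqrt m}(\omega_m^{ij})_{0\le i,j\le m-1}$ with $\omega_m=e^{2\pi i/m}$; note $F_2=H$. The $n=n_1\cdots n_\ell$ modes of $F_{(n_1,\dots,n_\ell)}$ are labelled $0,\dots,n-1$ by identifying the basis vector $|m_1\rangle\otimes\cdots\otimes|m_\ell\rangle$ ($0\le m_i<n_i$) of $\mathbb{C}^{n_1}\otimes\cdots\otimes\mathbb{C}^{n_\ell}$ with mode $m_1+n_1m_2+n_1n_2m_3+\cdots+(n_1\cdots n_{\ell-1})m_\ell$. Photons: each photon has an external mode in $\{0,\dots,n-1\}$ and an internal state in a Hilbert space $\mathcal{H}_{\rm int}$ with fixed orthonormal basis $\{|\xi_0\rangle,|\xi_1\rangle,\dots\}$. $a_i^\dagger[\xi]$ creates a (bosonic) photon in mode $i$ with internal state $\xi$;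 $|\vec 0\rangle$ is the vacuum. For an $n\times n$ unitary $U$, the linear optical unitary $\hat U$ acts on the external modes only: $a_j^\dagger[\xi]\mapsto\sum_i U_{ij}a_i^\dagger[\xi]$. $|s_0,\dots,s_{n-1}\rangle$ denotes the Fock state (no internal degrees of freedom) with $s_i$ photons in mode $i$; $|1,\dots,1\rangle$ has one photon in each mode. Photon-number-resolving detection (PNRD) on a set of modes measures the number of photons in each of those modes, regardless of internal state. Ideal patterns of $U$: tuples $(s_0,\dots,s_{n-1})$ of nonnegative integers with $\sum s_i=n$, $s_0=1$ and $\langle s_0,\dots,s_{n-1}|\hat U|1,\dots,1\rangle\ne 0$. Distillation protocol for $U$ with input state $\sigma$ (a state of $n$ photons in $n$ distinct modes): apply $\hat U$; perform PNRD on modes $1,\dots,n-1$, getting $(s_1,\dots,s_{n-1})$; set $s_0=n-\sum_{j\ge1}s_j$; the protocol heralds success iff $(s_0,\dots,s_{n-1})$ is an ideal pattern. The heralding rate $h_n(\sigma)$ is the probability of success. The output error rate $e_n(\sigma)$ is the conditional probability, given success, that the single photon in mode $0$ has internal state $|\xi_i\rangle$ for some $i\ge1$ (computed via the projective measurement onto the normalized states $a^\dagger_{m_0}[\xi_{i_0}]\cdots a^\dagger_{m_{n-1}}[\xi_{i_{n-1}}]|\vec 0\rangle$). Input model: $\rho^{(n)}(\epsilon)$ is the mixture over states $a_0^\dagger[\xi_{j_0}]\cdots a_{n-1}^\dagger[\xi_{j_{n-1}}]|\vec0\rangle$ in which the photon in mode $i$ independently has internal state $\xi_0$ with probability $1-\epsilon$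 and otherwise an error state: in the uniform random source (URS) model with parameter $R\ge1$, each $\xi_j$, $1\le j\le R$, with probability $\epsilon/R$; in the orthogonal-bad-bits (OBB) limit, the photon in mode $i$ has state $\xi_{i+1}$ with probability $\epsilon$. Write $h_n(\epsilon)=h_n(\rho^{(n)}(\epsilon))$ and $e_n(\epsilon)=e_n(\rho^{(n)}(\epsilon))$. *)

theory Defs
  imports Complex_Main "HOL-Library.Multiset" "HOL-Library.FuncSet" "HOL-Library.Landau_Symbols"
begin

definition fourier :: "nat \<Rightarrow> nat \<Rightarrow> nat \<Rightarrow> complex" where
  "fourier m i j = exp (2 * complex_of_real pi * \<i> / of_nat m) ^ (i * j) / complex_of_real (sqrt (real m))"

text \<open>t-th digit of mode a in the mixed radix (n_1,...,n_l), least significant first: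
  a = m_1 + n_1 m_2 + n_1 n_2 m_3 + ...\<close>
definition digit :: "nat list \<Rightarrow> nat \<Rightarrow> nat \<Rightarrow> nat" where
  "digit ns t a = (a div prod_list (take t ns)) mod (ns ! t)"

definition fourier_tensor :: "nat list \<Rightarrow> nat \<Rightarrow> nat \<Rightarrow> complex" where
  "fourier_tensor ns a b = (\<Prod>t<length ns. fourier (ns ! t) (digit ns t a) (digit ns t b))"

text \<open>Input: photon in input mode i (i<n) has internal state xi_(j i).
  Expanding hat U (prod_i a_i^dag[xi_(j i)]) |0> = sum over k : [n] -> [n] of
  (prod_i U (k i) i) prod_i a_(k i)^dag[xi_(j i)] |0>.  The state prod a^dag |0> depends
  only on the multiset of (mode, internal label) pairs, and equals sqrt(prod_x M(x)!)
  times the normalised basis state |M>.\<close>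
definition out_ms :: "nat \<Rightarrow> (nat \<Rightarrow> nat) \<Rightarrow> (nat \<Rightarrow> nat) \<Rightarrow> (nat \<times> nat) multiset" where
  "out_ms n j k = mset (map (\<lambda>i. (k i, j i)) [0..<n])"

definition out_amp_sum :: "(nat \<Rightarrow> nat \<Rightarrow> complex) \<Rightarrow> nat \<Rightarrow> (nat \<Rightarrow> nat) \<Rightarrow> (nat \<times> nat) multiset \<Rightarrow> complex" where
  "out_amp_sum U n j M = (\<Sum>k\<in>{k \<in> {0..<n} \<rightarrow>\<^sub>E {0..<n}. out_ms n j k = M}. \<Prod>i<n. U (k i) i)"

definition out_amp :: "(nat \<Rightarrow> nat \<Rightarrow> complex) \<Rightarrow> nat \<Rightarrow> (nat \<Rightarrow> nat) \<Rightarrow> (nat \<times> nat) multiset \<Rightarrow> complex" where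
  "out_amp U n j M = complex_of_real (sqrt (\<Prod>x\<in>set_mset M. fact (count M x))) * out_amp_sum U n j M"

definition out_prob :: "(nat \<Rightarrow> nat \<Rightarrow> complex) \<Rightarrow> nat \<Rightarrow> (nat \<Rightarrow> nat) \<Rightarrow> (nat \<times> nat) multiset \<Rightarrow> real" where
  "out_prob U n j M = (cmod (out_amp U n j M))\<^sup>2"

definition outcomes :: "nat \<Rightarrow> (nat \<Rightarrow> nat) \<Rightarrow> (nat \<times> nat) multiset set" where
  "outcomes n j = out_ms n j ` ({0..<n} \<rightarrow>\<^sub>E {0..<n})"

definition mode_count :: "(nat \<times> nat) multiset \<Rightarrow> nat \<Rightarrow> nat" where
  "mode_count M m = size (filter_mset (\<lambda>x. fst x = m) M)"

text \<open><s_0,...,s_(n-1)| hat U |1,...,1> (no internal degrees of freedom).\<close>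
definition fock_amp :: "(nat \<Rightarrow> nat \<Rightarrow> complex) \<Rightarrow> nat \<Rightarrow> (nat \<Rightarrow> nat) \<Rightarrow> complex" where
  "fock_amp U n s = complex_of_real (sqrt (\<Prod>m<n. fact (s m))) *
     (\<Sum>k\<in>{k \<in> {0..<n} \<rightarrow>\<^sub>E {0..<n}. \<forall>m<n. card {i. i < n \<and> k i = m} = s m}. \<Prod>i<n. U (k i) i)"

definition ideal_pattern :: "(nat \<Rightarrow> nat \<Rightarrow> complex) \<Rightarrow> nat \<Rightarrow> (nat \<Rightarrow> nat) \<Rightarrow> bool" where
  "ideal_pattern U n s \<longleftrightarrow> (\<Sum>m<n. s m) = n \<and> s 0 = 1 \<and> fock_amp U n s \<noteq> 0"

text \<open>PNRD on modes 1..n-1; s_0 := n - sum of the others.\<close>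
definition herald_pattern :: "nat \<Rightarrow> (nat \<times> nat) multiset \<Rightarrow> nat \<Rightarrow> nat" where
  "herald_pattern n M m = (if m = 0 then n - (\<Sum>i\<in>{1..<n}. mode_count M i) else mode_count M m)"

definition success :: "(nat \<Rightarrow> nat \<Rightarrow> complex) \<Rightarrow> nat \<Rightarrow> (nat \<times> nat) multiset \<Rightarrow> bool" where
  "success U n M \<longleftrightarrow> ideal_pattern U n (herald_pattern n M)"

definition output_error :: "(nat \<times> nat) multiset \<Rightarrow> bool" where
  "output_error M \<longleftrightarrow> (\<exists>c\<ge>1. (0, c) \<in># M)"

text \<open>Input state: mixture over label assignments j in Js with weights p j.\<close>
definition heralding_rate :: "(nat \<Rightarrow> nat \<Rightarrow> complex) \<Rightarrow> nat \<Rightarrow> (nat \<Rightarrow> nat) set \<Rightarrow> ((nat \<Rightarrow> nat) \<Rightarrow> real) \<Rightarrow> real" where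
  "heralding_rate U n Js p =
     (\<Sum>j\<in>Js. p j * (\<Sum>M\<in>{M \<in> outcomes n j. success U n M}. out_prob U n j M))"

definition error_joint :: "(nat \<Rightarrow> nat \<Rightarrow> complex) \<Rightarrow> nat \<Rightarrow> (nat \<Rightarrow> nat) set \<Rightarrow> ((nat \<Rightarrow> nat) \<Rightarrow> real) \<Rightarrow> real" where
  "error_joint U n Js p =
     (\<Sum>j\<in>Js. p j * (\<Sum>M\<in>{M \<in> outcomes n j. success U n M \<and> output_error M}. out_prob U n j M))"

definition error_rate :: "(nat \<Rightarrow> nat \<Rightarrow> complex) \<Rightarrow> nat \<Rightarrow> (nat \<Rightarrow> nat) set \<Rightarrow> ((nat \<Rightarrow> nat) \<Rightarrow> real) \<Rightarrow> real" where
  "error_rate U n Js p = error_joint U n Js p / heralding_rate U n Js p"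

definition urs_labels :: "nat \<Rightarrow> nat \<Rightarrow> (nat \<Rightarrow> nat) set" where
  "urs_labels n R = {0..<n} \<rightarrow>\<^sub>E {0..R}"

definition urs_prob :: "nat \<Rightarrow> nat \<Rightarrow> real \<Rightarrow> (nat \<Rightarrow> nat) \<Rightarrow> real" where
  "urs_prob n R \<epsilon> j = (\<Prod>i<n. if j i = 0 then 1 - \<epsilon> else \<epsilon> / real R)"

definition obb_labels :: "nat \<Rightarrow> (nat \<Rightarrow> nat) set" where
  "obb_labels n = PiE {0..<n} (\<lambda>i. {0, Suc i})"

definition obb_prob :: "nat \<Rightarrow> real \<Rightarrow> (nat \<Rightarrow> nat) \<Rightarrow> real" where
  "obb_prob n \<epsilon> j = (\<Prod>i<n. if j i = 0 then 1 - \<epsilon> else \<epsilon>)"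

end

theory Submission
  imports Defs
begin

text \<open>
  Expand the input mixture according to which photons carry an error (weight \<open>(1 - \<epsilon>)\<close> per
  good photon, \<open>\<epsilon> w\<close> per bad one).  The heralding rate is \<open>T + O(\<epsilon>)\<close>, where \<open>T\<close> is the
  heralding rate of the perfect input, and an error is heralded only if some photon is bad,
  so up to \<open>O(\<epsilon>\<^sup>2)\<close> only inputs with a single bad photon contribute to the error rate.
  If photon \<open>i\<close> is the bad one, the amplitude of a heralded error with pattern \<open>S\<close> is the
  part \<open>A\<^sub>i(S)\<close> of the ideal amplitude \<open>A(S) = \<Sum>\<^sub>i A\<^sub>i(S)\<close> in which photon \<open>i\<close> leaves in
  mode 0.  For \<open>F\<^bsub>(n\<^sub>1,\<dots>,n\<^sub>l)\<^esub>\<close> every input mode can be moved to every other one by a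
  digitwise cyclic shift of the columns, which only multiplies the rows by phases; hence all
  \<open>A\<^sub>i(S)\<close> coincide when \<open>A(S) \<noteq> 0\<close>, so \<open>\<Sum>\<^sub>i |A\<^sub>i(S)|\<^sup>2 = |A(S)|\<^sup>2 / n\<close> and the
  heralded errors have total weight \<open>\<epsilon> T / n + O(\<epsilon>\<^sup>2)\<close>.  Finally \<open>T > 0\<close>, because the
  amplitudes of all patterns with one photon in mode 0 add up to
  \<open>v\<^sup>2 (-v)\<^bsup>n-2\<^esup> n (n - 2) \<noteq> 0\<close>, where \<open>v = 1 / \<surd>n\<close> is the entry of the first row.
\<close>

section \<open>Fourier matrices and their column symmetry\<close>

definition unit_root :: "nat \<Rightarrow> complex" where
  "unit_root m = exp (2 * complex_of_real pi * \<i> / of_nat m)"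

lemma fourier_eq_unit_root_power:
  "fourier m a b = unit_root m ^ (a * b) / complex_of_real (sqrt (real m))"
  by (simp add: fourier_def unit_root_def)

lemma unit_root_power: "unit_root m ^ k = cis (2 * pi * real k / real m)"
proof -
  have "unit_root m = cis (2 * pi / real m)"
    by (simp add: unit_root_def cis_conv_exp mult_ac)
  then show ?thesis
    by (simp add: DeMoivre mult_ac)
qed

lemma unit_root_power_self: "m > 0 \<Longrightarrow> unit_root m ^ m = 1"
  by (simp add: unit_root_power)

lemma unit_root_power_mod:
  assumes "m > 0"
  shows "unit_root m ^ k = unit_root m ^ (k mod m)"
proof -
  have "unit_root m ^ k = (unit_root m ^ m) ^ (k div m) * unit_root m ^ (k mod m)"
    by (metis div_mult_mod_eq mult.commute power_add power_mult)
  then show ?thesis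
    using unit_root_power_self[OF assms] by simp
qed

lemma unit_root_power_neq_1:
  assumes "0 < k" "k < m"
  shows "unit_root m ^ k \<noteq> 1"
  using inj_onD[OF bij_betw_imp_inj_on[OF bij_betw_roots_unity], of m k 0] assms
  by (auto simp: unit_root_power)

lemma sum_unit_root_powers:
  assumes "y < m"
  shows "(\<Sum>x<m. unit_root m ^ (x * y)) = (if y = 0 then of_nat m else 0)"
proof (cases "y = 0")
  case False
  let ?z = "unit_root m ^ y"
  have "?z \<noteq> 1"
    using unit_root_power_neq_1 assms False by simp
  moreover have "?z ^ m = (unit_root m ^ m) ^ y"
    by (simp only: power_mult[symmetric] mult.commute)
  then have "?z ^ m = 1"
    using unit_root_power_self assms by simp
  ultimately have "(\<Sum>x<m. ?z ^ x) = 0"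
    by (simp add: sum_gp_strict)
  then show ?thesis
    using False by (simp add: power_mult[symmetric] mult.commute)
qed simp

lemma fourier_row_0: "fourier m 0 b = 1 / complex_of_real (sqrt (real m))"
  by (simp add: fourier_eq_unit_root_power)

lemma fourier_column_sum:
  assumes "b < m"
  shows "(\<Sum>a<m. fourier m a b) = (if b = 0 then complex_of_real (sqrt (real m)) else 0)"
proof -
  have "(\<Sum>a<m. fourier m a b) = (\<Sum>a<m. unit_root m ^ (a * b)) / complex_of_real (sqrt (real m))"
    by (simp add: fourier_eq_unit_root_power sum_divide_distrib)
  also have "\<dots> = (if b = 0 then complex_of_real (real m / sqrt (real m)) else 0)"
    using assms by (simp add: sum_unit_root_powers)
  finally show ?thesis
    by (simp add: real_div_sqrt)
qed

lemma fourier_shift: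
  assumes "m > 0"
  shows "fourier m a ((b + d) mod m) = fourier m a b * unit_root m ^ (a * d)"
proof -
  have "unit_root m ^ (a * ((b + d) mod m)) = unit_root m ^ (a * (b + d))"
    using unit_root_power_mod[OF assms] by (metis mod_mult_right_eq)
  then show ?thesis
    by (simp add: fourier_eq_unit_root_power distrib_left power_add)
qed

lemma fourier_tensor_Nil [simp]: "fourier_tensor [] a b = 1"
  by (simp add: fourier_tensor_def)

lemma fourier_tensor_Cons:
  "fourier_tensor (m # ns) a b = fourier m (a mod m) (b mod m) * fourier_tensor ns (a div m) (b div m)"
  by (simp only: fourier_tensor_def length_Cons prod.lessThan_Suc_shift)
    (simp add: digit_def div_mult2_eq)

lemma mixed_radix_less:
  fixes x m y P :: nat
  assumes "x < m" "y < P"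
  shows "x + m * y < m * P"
proof -
  have "x + m * y < m * Suc y"
    using assms by simp
  also have "\<dots> \<le> m * P"
    using assms by (intro mult_le_mono2) simp
  finally show ?thesis .
qed

lemma bij_betw_divmod:
  fixes m :: nat
  assumes "m > 0"
  shows "bij_betw (\<lambda>a. (a mod m, a div m)) {..<m * P} ({..<m} \<times> {..<P})"
  by (rule bij_betw_byWitness[where f' = "\<lambda>(x, y). x + m * y"])
    (use assms in \<open>auto simp: mixed_radix_less div_less_iff_less_mult mult.commute[of P m]\<close>)

lemma bij_betw_mixed_radix:
  fixes m :: nat
  assumes "m > 0"
  shows "bij_betw (\<lambda>(x, y). x + m * y) ({..<m} \<times> {..<P}) {..<m * P}"
  by (rule bij_betw_byWitness[where f' = "\<lambda>a. (a mod m, a div m)"])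
    (use assms in \<open>auto simp: mixed_radix_less div_less_iff_less_mult mult.commute[of P m]\<close>)

lemma sum_lessThan_mult:
  fixes m :: nat and h :: "nat \<Rightarrow> 'a::comm_monoid_add"
  assumes "m > 0"
  shows "(\<Sum>a<m * P. h a) = (\<Sum>x<m. \<Sum>y<P. h (x + m * y))"
  by (simp add: sum.reindex_bij_betw[OF bij_betw_mixed_radix[OF assms], symmetric]
      sum.cartesian_product case_prod_beta)

lemma bij_betw_digitwise:
  fixes m :: nat
  assumes "m > 0" "bij_betw f {..<m} {..<m}" "bij_betw g {..<P} {..<P}"
  shows "bij_betw (\<lambda>b. f (b mod m) + m * g (b div m)) {..<m * P} {..<m * P}"
proof -
  have "bij_betw ((\<lambda>(x, y). x + m * y) \<circ> (map_prod f g \<circ> (\<lambda>a. (a mod m, a div m))))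
      {..<m * P} {..<m * P}"
    using bij_betw_trans[OF bij_betw_trans[OF bij_betw_divmod[OF assms(1)] bij_betw_map_prod[OF assms(2,3)]]
        bij_betw_mixed_radix[OF assms(1)]] .
  then show ?thesis
    by (simp add: o_def)
qed

lemma mod_add_cancel_nat:
  fixes x y d m :: nat
  assumes "(x + d) mod m = (y + d) mod m"
  shows "x mod m = y mod m"
  using assms nat_mod_eq_iff by simp

lemma bij_betw_add_mod:
  fixes m :: nat
  assumes "m > 0"
  shows "bij_betw (\<lambda>x. (x + d) mod m) {..<m} {..<m}"
proof -
  have "inj_on (\<lambda>x. (x + d) mod m) {..<m}"
  proof (rule inj_onI)
    fix x y assume "x \<in> {..<m}" "y \<in> {..<m}" "(x + d) mod m = (y + d) mod m"
    then show "x = y"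
      using mod_add_cancel_nat[of x d m y] by simp
  qed
  moreover have "(\<lambda>x. (x + d) mod m) ` {..<m} \<subseteq> {..<m}"
    using assms by auto
  ultimately show ?thesis
    by (simp add: bij_betw_def endo_inj_surj)
qed

lemma fourier_tensor_row_0: "fourier_tensor ns 0 b = 1 / complex_of_real (sqrt (real (prod_list ns)))"
  by (induction ns arbitrary: b) (simp_all add: fourier_tensor_Cons fourier_row_0 real_sqrt_mult)

lemma fourier_tensor_column_sum:
  assumes "\<forall>m\<in>set ns. m > 0" "b < prod_list ns"
  shows "(\<Sum>a<prod_list ns. fourier_tensor ns a b)
    = (if b = 0 then complex_of_real (sqrt (real (prod_list ns))) else 0)"
  using assms
proof (induction ns arbitrary: b)
  case (Cons m ns)
  then have m: "m > 0" and b: "b mod m < m" "b div m < prod_list ns"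
    by (auto simp: less_mult_imp_div_less mult.commute)
  have "(\<Sum>a<prod_list (m # ns). fourier_tensor (m # ns) a b)
      = (\<Sum>x<m. fourier m x (b mod m)) * (\<Sum>y<prod_list ns. fourier_tensor ns y (b div m))"
    using m by (simp add: sum_lessThan_mult fourier_tensor_Cons sum_product)
  also have "\<dots> = (if b mod m = 0 \<and> b div m = 0
      then complex_of_real (sqrt (real m) * sqrt (real (prod_list ns))) else 0)"
    using Cons b by (simp add: fourier_column_sum)
  also have "b mod m = 0 \<and> b div m = 0 \<longleftrightarrow> b = 0"
    by (metis div_0 mod_eq_self_iff_div_eq_0)
  finally show ?case
    by (simp add: real_sqrt_mult)
qed simp

text \<open>For the Fourier tensor products the column permutations \<open>\<sigma>\<close> below are digitwise cyclic
  shifts (\<open>fourier_shift\<close>).\<close>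

definition column_phase_transitive :: "(nat \<Rightarrow> nat \<Rightarrow> complex) \<Rightarrow> nat \<Rightarrow> bool" where
  "column_phase_transitive U n \<longleftrightarrow> (\<forall>i<n. \<forall>i'<n. \<exists>\<sigma> \<phi>. bij_betw \<sigma> {..<n} {..<n} \<and> \<sigma> i = i' \<and>
     (\<forall>a<n. \<forall>b<n. U a (\<sigma> b) = U a b * \<phi> a))"

lemma column_phase_transitive_fourier_tensor:
  assumes "\<forall>m\<in>set ns. m > 0"
  shows "column_phase_transitive (fourier_tensor ns) (prod_list ns)"
  using assms
proof (induction ns)
  case Nil
  then show ?case
    unfolding column_phase_transitive_def
    by (auto intro!: exI[of _ id] exI[of _ "\<lambda>_. 1 :: complex"])
next
  case (Cons m ns)
  let ?P = "prod_list ns"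
  have m: "m > 0" and IH: "column_phase_transitive (fourier_tensor ns) ?P"
    using Cons by auto
  show ?case
    unfolding column_phase_transitive_def
  proof (intro allI impI)
    fix i i' assume ii': "i < prod_list (m # ns)" "i' < prod_list (m # ns)"
    then have "i div m < ?P" "i' div m < ?P"
      using m by (auto simp: less_mult_imp_div_less mult.commute)
    then obtain \<sigma> \<phi> where \<sigma>: "bij_betw \<sigma> {..<?P} {..<?P}" "\<sigma> (i div m) = i' div m"
      and \<phi>: "\<forall>a<?P. \<forall>b<?P. fourier_tensor ns a (\<sigma> b) = fourier_tensor ns a b * \<phi> a"
      using IH[unfolded column_phase_transitive_def, rule_format] by blast
    define d where "d = m - i mod m + i' mod m"
    define \<sigma>' where "\<sigma>' b = (b mod m + d) mod m + m * \<sigma> (b div m)" for b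
    define \<phi>' where "\<phi>' a = unit_root m ^ (a mod m * d) * \<phi> (a div m)" for a
    have "bij_betw \<sigma>' {..<prod_list (m # ns)} {..<prod_list (m # ns)}"
      unfolding \<sigma>'_def using bij_betw_digitwise[OF m bij_betw_add_mod[OF m] \<sigma>(1)] by simp
    moreover have "i mod m + d = i' mod m + m"
      using mod_less_divisor[OF m, of i] by (simp add: d_def)
    then have "\<sigma>' i = i'"
      using \<sigma>(2) by (simp add: \<sigma>'_def)
    moreover have "fourier_tensor (m # ns) a (\<sigma>' b) = fourier_tensor (m # ns) a b * \<phi>' a"
      if "a < prod_list (m # ns)" "b < prod_list (m # ns)" for a b
    proof -
      have "a div m < ?P" "b div m < ?P"
        using that m by (auto simp: less_mult_imp_div_less mult.commute)
      then show ?thesis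
        using m \<phi> by (simp add: \<sigma>'_def \<phi>'_def fourier_tensor_Cons fourier_shift)
    qed
    ultimately show "\<exists>\<sigma> \<phi>. bij_betw \<sigma> {..<prod_list (m # ns)} {..<prod_list (m # ns)} \<and> \<sigma> i = i' \<and>
        (\<forall>a<prod_list (m # ns). \<forall>b<prod_list (m # ns).
          fourier_tensor (m # ns) a (\<sigma> b) = fourier_tensor (m # ns) a b * \<phi> a)"
      by blast
  qed
qed

text \<open>An assignment \<open>k\<close> sends the photon entering in mode \<open>i\<close> to output mode \<open>k i\<close>:
  \<open>\<^bold>U\<close> maps \<open>\<Prod>\<^sub>i a\<^sup>\<dagger>\<^sub>i\<close> to the sum over all assignments of
  \<open>path_weight U n k \<cdot> \<Prod>\<^sub>i a\<^sup>\<dagger>\<^sub>k\<^sub>(\<^sub>i\<^sub>)\<close>, and the occupied modes form \<open>mode_mset n k\<close>.\<close>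

abbreviation assignments :: "nat \<Rightarrow> (nat \<Rightarrow> nat) set" where
  "assignments n \<equiv> {0..<n} \<rightarrow>\<^sub>E {0..<n}"

definition mode_mset :: "nat \<Rightarrow> (nat \<Rightarrow> nat) \<Rightarrow> nat multiset" where
  "mode_mset n k = image_mset k (mset_set {0..<n})"

definition path_weight :: "(nat \<Rightarrow> nat \<Rightarrow> complex) \<Rightarrow> nat \<Rightarrow> (nat \<Rightarrow> nat) \<Rightarrow> complex" where
  "path_weight U n k = (\<Prod>i<n. U (k i) i)"

definition pattern_amp :: "(nat \<Rightarrow> nat \<Rightarrow> complex) \<Rightarrow> nat \<Rightarrow> nat multiset \<Rightarrow> complex" where
  "pattern_amp U n S = (\<Sum>k\<in>{k \<in> assignments n. mode_mset n k = S}. path_weight U n k)"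

text \<open>The part of \<open>pattern_amp U n S\<close> in which the photon entering in mode \<open>i\<close> leaves in
  mode 0: if that photon is the only one with an error, this is the amplitude of a heralded
  error with pattern \<open>S\<close>.\<close>

definition pattern_amp_from :: "(nat \<Rightarrow> nat \<Rightarrow> complex) \<Rightarrow> nat \<Rightarrow> nat \<Rightarrow> nat multiset \<Rightarrow> complex" where
  "pattern_amp_from U n i S =
     (\<Sum>k\<in>{k \<in> assignments n. mode_mset n k = S \<and> k i = 0}. path_weight U n k)"

definition mset_fact :: "'a multiset \<Rightarrow> real" where
  "mset_fact M = (\<Prod>x\<in>set_mset M. fact (count M x))"

definition ideal_msets :: "(nat \<Rightarrow> nat \<Rightarrow> complex) \<Rightarrow> nat \<Rightarrow> nat multiset set" where
  "ideal_msets U n =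
     {S \<in> mode_mset n ` assignments n. count S 0 = 1 \<and> pattern_amp U n S \<noteq> 0}"

definition ideal_herald_rate :: "(nat \<Rightarrow> nat \<Rightarrow> complex) \<Rightarrow> nat \<Rightarrow> real" where
  "ideal_herald_rate U n = (\<Sum>S\<in>ideal_msets U n. mset_fact S * (cmod (pattern_amp U n S))\<^sup>2)"

definition herald_prob :: "(nat \<Rightarrow> nat \<Rightarrow> complex) \<Rightarrow> nat \<Rightarrow> (nat \<Rightarrow> nat) \<Rightarrow> real" where
  "herald_prob U n j = (\<Sum>M\<in>{M \<in> outcomes n j. success U n M}. out_prob U n j M)"

definition herald_error_prob :: "(nat \<Rightarrow> nat \<Rightarrow> complex) \<Rightarrow> nat \<Rightarrow> (nat \<Rightarrow> nat) \<Rightarrow> real" where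
  "herald_error_prob U n j =
     (\<Sum>M\<in>{M \<in> outcomes n j. success U n M \<and> output_error M}. out_prob U n j M)"

lemma finite_ideal_msets: "finite (ideal_msets U n)"
  unfolding ideal_msets_def
  by (rule finite_subset[of _ "mode_mset n ` assignments n"]) (auto intro: finite_PiE)

lemma mset_fact_pos: "mset_fact M > 0"
  by (simp add: mset_fact_def prod_pos)

lemma mset_fact_image_mset_inj:
  assumes "inj g"
  shows "mset_fact (image_mset g M) = mset_fact M"
proof -
  have "g -` {g x} \<inter> set_mset M = (if x \<in># M then {x} else {})" for x
    using assms by (auto dest: injD)
  then have "count (image_mset g M) (g x) = count M x" for x
    by (simp add: count_image_mset not_in_iff)
  then show ?thesis
    using assms by (simp add: mset_fact_def prod.reindex inj_on_subset[of g UNIV])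
qed

lemma out_ms_eq_image_mset: "out_ms n j k = image_mset (\<lambda>i. (k i, j i)) (mset_set {0..<n})"
  by (simp add: out_ms_def mset_map)

lemma mem_out_ms_iff: "x \<in># out_ms n j k \<longleftrightarrow> (\<exists>i<n. x = (k i, j i))"
  by (auto simp: out_ms_eq_image_mset)

lemma image_mset_fst_out_ms: "image_mset fst (out_ms n j k) = mode_mset n k"
  by (simp add: out_ms_eq_image_mset mode_mset_def image_mset.compositionality o_def)

lemma out_ms_labelled:
  assumes "\<And>i. i < n \<Longrightarrow> j i = lab (k i)"
  shows "out_ms n j k = image_mset (\<lambda>a. (a, lab a)) (mode_mset n k)"
  using assms
  by (auto simp: out_ms_eq_image_mset mode_mset_def image_mset.compositionality o_def
      intro!: image_mset_cong)

lemma image_mset_fst_labelled: "image_mset fst (image_mset (\<lambda>a. (a, lab a)) S) = S"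
  by (simp add: image_mset.compositionality o_def)

lemma inj_labelled: "inj (\<lambda>a. (a, lab a))"
  by (rule injI) simp

lemma inj_image_mset_labelled: "inj (image_mset (\<lambda>a. (a, lab a)))"
  by (rule injI) (metis image_mset_fst_labelled)

lemma count_mode_mset: "count (mode_mset n k) m = card {i \<in> {0..<n}. k i = m}"
proof -
  have "count (mode_mset n k) m = card (k -` {m} \<inter> {0..<n})"
    by (simp add: mode_mset_def count_image_mset)
  also have "k -` {m} \<inter> {0..<n} = {i \<in> {0..<n}. k i = m}"
    by auto
  finally show ?thesis .
qed

lemma sum_count_eq_size:
  assumes "finite A" "set_mset M \<subseteq> A"
  shows "(\<Sum>a\<in>A. count M a) = size M"
  using assms(2)
proof (induction M)
  case (add x M)
  have "(\<Sum>a\<in>A. count (add_mset x M) a) = (\<Sum>a\<in>A. count M a + (if a = x then 1 else 0))"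
    by (intro sum.cong) auto
  also have "\<dots> = (\<Sum>a\<in>A. count M a) + 1"
    using add.prems assms(1) by (simp add: sum.distrib)
  finally show ?case
    using add by simp
qed simp

lemma sum_count_mode_mset:
  assumes "k \<in> assignments n"
  shows "(\<Sum>a<n. count (mode_mset n k) a) = n"
proof -
  have "set_mset (mode_mset n k) \<subseteq> {..<n}"
    using assms by (auto simp: mode_mset_def)
  then show ?thesis
    by (simp add: sum_count_eq_size mode_mset_def)
qed

lemma mode_mset_eq_iff_counts:
  assumes "k \<in> assignments n" "k' \<in> assignments n"
  shows "mode_mset n k' = mode_mset n k \<longleftrightarrow>
    (\<forall>m<n. card {i. i < n \<and> k' i = m} = count (mode_mset n k) m)"
proof -
  have "count (mode_mset n k) m = 0" "count (mode_mset n k') m = 0" if "\<not> m < n" for m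
    using assms that by (auto simp: mode_mset_def count_eq_zero_iff)
  then have "mode_mset n k' = mode_mset n k \<longleftrightarrow> (\<forall>m<n. count (mode_mset n k') m = count (mode_mset n k) m)"
    by (metis multiset_eqI)
  then show ?thesis
    by (simp add: count_mode_mset)
qed

lemma herald_pattern_eq_count:
  assumes "k \<in> assignments n" "image_mset fst M = mode_mset n k" "n > 0"
  shows "herald_pattern n M = count (mode_mset n k)"
proof
  fix m
  have mode_count: "mode_count M a = count (mode_mset n k) a" for a
    unfolding mode_count_def assms(2)[symmetric] by (induction M) auto
  have "(\<Sum>a<n. count (mode_mset n k) a) = count (mode_mset n k) 0 + (\<Sum>a\<in>{1..<n}. count (mode_mset n k) a)"
    using assms(3) by (simp add: sum.atLeast_Suc_lessThan atLeast0LessThan[symmetric])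
  then have "n - (\<Sum>a\<in>{1..<n}. mode_count M a) = count (mode_mset n k) 0"
    using sum_count_mode_mset[OF assms(1)] by (simp add: mode_count)
  then show "herald_pattern n M m = count (mode_mset n k) m"
    by (simp add: herald_pattern_def mode_count)
qed

lemma success_iff_ideal:
  assumes "k \<in> assignments n" "image_mset fst M = mode_mset n k" "n > 0"
  shows "success U n M \<longleftrightarrow> mode_mset n k \<in> ideal_msets U n"
proof -
  have "fock_amp U n (count (mode_mset n k)) =
      complex_of_real (sqrt (\<Prod>m<n. fact (count (mode_mset n k) m))) * pattern_amp U n (mode_mset n k)"
    using assms(1) by (simp add: fock_amp_def pattern_amp_def path_weight_def mode_mset_eq_iff_counts
        cong: conj_cong)
  moreover have "sqrt (\<Prod>m<n. fact (count (mode_mset n k) m)) \<noteq> 0"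
    by (simp add: prod_pos)
  ultimately show ?thesis
    using assms sum_count_mode_mset[OF assms(1)]
    by (auto simp: success_def herald_pattern_eq_count ideal_pattern_def ideal_msets_def)
qed

lemma out_prob_eq: "out_prob U n j M = mset_fact M * (cmod (out_amp_sum U n j M))\<^sup>2"
  using mset_fact_pos[of M]
  by (simp add: out_prob_def out_amp_def mset_fact_def norm_mult power_mult_distrib)

lemma out_amp_sum_eq: "out_amp_sum U n j M = (\<Sum>k\<in>{k \<in> assignments n. out_ms n j k = M}. path_weight U n k)"
  by (simp add: out_amp_sum_def path_weight_def)

lemma out_prob_labelled:
  "out_prob U n j (image_mset (\<lambda>a. (a, lab a)) S) = mset_fact S *
    (cmod (\<Sum>k\<in>{k \<in> assignments n. out_ms n j k = image_mset (\<lambda>a. (a, lab a)) S}. path_weight U n k))\<^sup>2"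
  by (simp add: out_prob_eq out_amp_sum_eq mset_fact_image_mset_inj[OF inj_labelled])

lemma herald_prob_error_free:
  assumes "n > 0" "\<forall>i<n. j i = 0"
  shows "herald_prob U n j = ideal_herald_rate U n"
proof -
  let ?g = "image_mset (\<lambda>a::nat. (a, 0::nat))"
  have out: "out_ms n j k = ?g (mode_mset n k)" for k
    using out_ms_labelled[of n j "\<lambda>_. 0::nat" k] assms(2) by simp
  have success: "success U n (?g (mode_mset n k)) \<longleftrightarrow> mode_mset n k \<in> ideal_msets U n"
    if "k \<in> assignments n" for k
    using success_iff_ideal[OF that image_mset_fst_labelled[of "\<lambda>_. 0::nat" "mode_mset n k"] assms(1)]
    by simp
  have "{M \<in> outcomes n j. success U n M} = ?g ` ideal_msets U n"
    using success by (auto simp: outcomes_def out ideal_msets_def)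
  then have "herald_prob U n j = (\<Sum>S\<in>ideal_msets U n. out_prob U n j (?g S))"
    unfolding herald_prob_def
    using sum.reindex[OF inj_on_subset[OF inj_image_mset_labelled[of "\<lambda>_. 0::nat"]]] by simp
  also have "\<dots> = ideal_herald_rate U n"
  proof -
    have "{k \<in> assignments n. out_ms n j k = ?g S} = {k \<in> assignments n. mode_mset n k = S}" for S
      using inj_image_mset_labelled[of "\<lambda>_. 0::nat"] by (auto simp: out dest: injD)
    then show ?thesis
      using out_prob_labelled[of U n j "\<lambda>_. 0::nat"]
      by (simp add: ideal_herald_rate_def pattern_amp_def)
  qed
  finally show ?thesis .
qed

lemma herald_error_prob_error_free:
  assumes "\<forall>i<n. j i = 0"
  shows "herald_error_prob U n j = 0"
proof -
  have "\<not> output_error (out_ms n j k)" for k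
    using assms by (auto simp: output_error_def mem_out_ms_iff)
  then have no_event: "{M \<in> outcomes n j. success U n M \<and> output_error M} = {}"
    by (auto simp: outcomes_def)
  show ?thesis
    unfolding herald_error_prob_def no_event by simp
qed

section \<open>Heralded errors caused by a single bad photon\<close>

definition single_error :: "nat \<Rightarrow> nat \<Rightarrow> nat \<Rightarrow> nat \<Rightarrow> nat" where
  "single_error n i c = (\<lambda>b\<in>{0..<n}. if b = i then c else 0)"

lemma count_mode_mset_0_eq_1_iff:
  "count (mode_mset n k) 0 = 1 \<longleftrightarrow> (\<exists>i<n. k i = 0 \<and> (\<forall>b<n. b \<noteq> i \<longrightarrow> k b \<noteq> 0))"
proof
  assume "count (mode_mset n k) 0 = 1"
  then have "card {b \<in> {0..<n}. k b = 0} = 1"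
    by (simp add: count_mode_mset)
  then obtain i where i: "{b \<in> {0..<n}. k b = 0} = {i}"
    by (rule card_1_singletonE)
  have "i \<in> {b \<in> {0..<n}. k b = 0}"
    using i by simp
  moreover have "k b \<noteq> 0" if "b < n" "b \<noteq> i" for b
  proof
    assume "k b = 0"
    then have "b \<in> {b \<in> {0..<n}. k b = 0}"
      using that(1) by simp
    then have "b \<in> {i}"
      unfolding i .
    then show False
      using that(2) by simp
  qed
  ultimately show "\<exists>i<n. k i = 0 \<and> (\<forall>b<n. b \<noteq> i \<longrightarrow> k b \<noteq> 0)"
    by auto
next
  assume "\<exists>i<n. k i = 0 \<and> (\<forall>b<n. b \<noteq> i \<longrightarrow> k b \<noteq> 0)"
  then obtain i where "i < n" "k i = 0" "\<forall>b<n. b \<noteq> i \<longrightarrow> k b \<noteq> 0"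
    by blast
  then have "{b \<in> {0..<n}. k b = 0} = {i}"
    by auto
  then show "count (mode_mset n k) 0 = 1"
    by (simp add: count_mode_mset)
qed

definition label_mode_0 :: "nat \<Rightarrow> nat \<Rightarrow> nat" where
  "label_mode_0 c a = (if a = 0 then c else 0)"

lemma out_ms_single_error_eq_iff:
  assumes "i < n" "c \<ge> 1" "count S 0 = 1" "k \<in> assignments n"
  shows "out_ms n (single_error n i c) k = image_mset (\<lambda>a. (a, label_mode_0 c a)) S \<longleftrightarrow>
    mode_mset n k = S \<and> k i = 0"
proof
  assume eq: "out_ms n (single_error n i c) k = image_mset (\<lambda>a. (a, label_mode_0 c a)) S"
  then have "mode_mset n k = S"
    by (metis image_mset_fst_out_ms image_mset_fst_labelled)
  moreover have "0 \<in># S"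
    using assms(3) by (simp add: count_greater_zero_iff[symmetric])
  then have "(0, c) \<in># out_ms n (single_error n i c) k"
    unfolding eq by (force simp: label_mode_0_def)
  then obtain b where "b < n" "k b = 0" "single_error n i c b = c"
    by (auto simp: mem_out_ms_iff)
  ultimately show "mode_mset n k = S \<and> k i = 0"
    using assms(2) by (auto simp: single_error_def split: if_splits)
next
  assume k: "mode_mset n k = S \<and> k i = 0"
  have "single_error n i c b = label_mode_0 c (k b)" if "b < n" for b
  proof -
    have "k b \<noteq> 0" if "b \<noteq> i"
      using count_mode_mset_0_eq_1_iff[of n k] that \<open>b < n\<close> assms(1,3) k by metis
    then show ?thesis
      using that k by (auto simp: single_error_def label_mode_0_def)
  qed
  then show "out_ms n (single_error n i c) k = image_mset (\<lambda>a. (a, label_mode_0 c a)) S"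
    using out_ms_labelled k by blast
qed

lemma out_prob_single_error:
  assumes "i < n" "c \<ge> 1" "count S 0 = 1"
  shows "out_prob U n (single_error n i c) (image_mset (\<lambda>a. (a, label_mode_0 c a)) S)
    = mset_fact S * (cmod (pattern_amp_from U n i S))\<^sup>2"
proof -
  have "{k \<in> assignments n. out_ms n (single_error n i c) k = image_mset (\<lambda>a. (a, label_mode_0 c a)) S}
      = {k \<in> assignments n. mode_mset n k = S \<and> k i = 0}"
    using out_ms_single_error_eq_iff[OF assms] by blast
  then show ?thesis
    by (simp add: out_prob_labelled pattern_amp_from_def)
qed

lemma heralded_error_single_error:
  assumes "n > 0" "i < n" "c \<ge> 1" "M \<in> outcomes n (single_error n i c)"
  shows "success U n M \<and> output_error M \<longleftrightarrow>
    M \<in> image_mset (\<lambda>a. (a, label_mode_0 c a)) ` ideal_msets U n"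
proof -
  obtain k where k: "k \<in> assignments n" "M = out_ms n (single_error n i c) k"
    using assms(4) by (auto simp: outcomes_def)
  have success: "success U n M \<longleftrightarrow> mode_mset n k \<in> ideal_msets U n"
    using success_iff_ideal[OF k(1) image_mset_fst_out_ms assms(1)] k(2) by simp
  have "output_error M \<longleftrightarrow> k i = 0"
  proof
    assume "output_error M"
    then obtain c' b where "c' \<ge> 1" "b < n" "k b = 0" "single_error n i c b = c'"
      by (auto simp: output_error_def k(2) mem_out_ms_iff)
    then show "k i = 0"
      by (auto simp: single_error_def split: if_splits)
  next
    assume "k i = 0"
    then have "(0, c) \<in># M"
      using assms(2) by (auto simp: k(2) mem_out_ms_iff single_error_def)
    then show "output_error M"
      using assms(3) by (auto simp: output_error_def)
  qed
  moreover have "M \<in> image_mset (\<lambda>a. (a, label_mode_0 c a)) ` ideal_msets U n \<longleftrightarrow>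
      mode_mset n k \<in> ideal_msets U n \<and> k i = 0"
  proof
    assume "M \<in> image_mset (\<lambda>a. (a, label_mode_0 c a)) ` ideal_msets U n"
    then obtain S where S: "S \<in> ideal_msets U n" "M = image_mset (\<lambda>a. (a, label_mode_0 c a)) S"
      by blast
    then have mode: "mode_mset n k = S"
      using k(2) by (metis image_mset_fst_out_ms image_mset_fst_labelled)
    have "count S 0 = 1"
      using S(1) by (simp add: ideal_msets_def)
    then have "k i = 0"
      using out_ms_single_error_eq_iff[OF assms(2,3) _ k(1)] S(2) k(2) mode by simp
    then show "mode_mset n k \<in> ideal_msets U n \<and> k i = 0"
      using S(1) mode by simp
  next
    assume "mode_mset n k \<in> ideal_msets U n \<and> k i = 0"
    then show "M \<in> image_mset (\<lambda>a. (a, label_mode_0 c a)) ` ideal_msets U n"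
      using out_ms_single_error_eq_iff[OF assms(2,3) _ k(1), of "mode_mset n k"] k(2)
      by (auto simp: ideal_msets_def)
  qed
  ultimately show ?thesis
    using success by simp
qed

lemma herald_error_prob_single_error:
  assumes "n > 0" "i < n" "c \<ge> 1"
  shows "herald_error_prob U n (single_error n i c) =
    (\<Sum>S\<in>ideal_msets U n. mset_fact S * (cmod (pattern_amp_from U n i S))\<^sup>2)"
proof -
  let ?j = "single_error n i c"
  let ?g = "image_mset (\<lambda>a. (a, label_mode_0 c a))"
  have "herald_error_prob U n ?j = (\<Sum>M\<in>?g ` ideal_msets U n. out_prob U n ?j M)"
    unfolding herald_error_prob_def
  proof (rule sum.mono_neutral_left)
    show "finite (?g ` ideal_msets U n)"
      by (simp add: finite_ideal_msets)
    show "{M \<in> outcomes n ?j. success U n M \<and> output_error M} \<subseteq> ?g ` ideal_msets U n"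
      using heralded_error_single_error[OF assms] by blast
    show "\<forall>M\<in>?g ` ideal_msets U n - {M \<in> outcomes n ?j. success U n M \<and> output_error M}.
        out_prob U n ?j M = 0"
    proof
      fix M assume "M \<in> ?g ` ideal_msets U n - {M \<in> outcomes n ?j. success U n M \<and> output_error M}"
      then have "M \<notin> outcomes n ?j"
        using heralded_error_single_error[OF assms] by blast
      then have no_path: "{k \<in> assignments n. out_ms n ?j k = M} = {}"
        by (auto simp: outcomes_def)
      show "out_prob U n ?j M = 0"
        unfolding out_prob_eq out_amp_sum_eq no_path by simp
    qed
  qed
  also have "\<dots> = (\<Sum>S\<in>ideal_msets U n. out_prob U n ?j (?g S))"
    by (rule sum.reindex[OF inj_on_subset[OF inj_image_mset_labelled subset_UNIV], unfolded o_def])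
  also have "\<dots> = (\<Sum>S\<in>ideal_msets U n. mset_fact S * (cmod (pattern_amp_from U n i S))\<^sup>2)"
    using assms(2,3) by (intro sum.cong) (auto simp: out_prob_single_error ideal_msets_def)
  finally show ?thesis .
qed

section \<open>The column symmetry equidistributes heralded errors\<close>

lemma bij_betw_precompose_PiE:
  assumes \<sigma>: "bij_betw \<sigma> A A"
  shows "bij_betw (\<lambda>k. restrict (k \<circ> \<sigma>) A) (A \<rightarrow>\<^sub>E B) (A \<rightarrow>\<^sub>E B)"
proof -
  obtain \<tau> where \<tau>: "bij_betw \<tau> A A" "\<And>x. x \<in> A \<Longrightarrow> \<tau> (\<sigma> x) = x" "\<And>x. x \<in> A \<Longrightarrow> \<sigma> (\<tau> x) = x"
    using bij_betw_inv_into[OF \<sigma>] bij_betw_inv_into_left[OF \<sigma>] bij_betw_inv_into_right[OF \<sigma>] by blast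
  have comp: "restrict (restrict (k \<circ> f) A \<circ> g) A = k"
    if "k \<in> A \<rightarrow>\<^sub>E B" "bij_betw g A A" "\<And>x. x \<in> A \<Longrightarrow> f (g x) = x" for k f g
  proof -
    have "restrict (restrict (k \<circ> f) A \<circ> g) A = restrict k A"
      by (rule restrict_ext) (simp add: that(3) bij_betw_apply[OF that(2)])
    then show ?thesis
      using that(1) by simp
  qed
  have image: "(\<lambda>k. restrict (k \<circ> f) A) ` (A \<rightarrow>\<^sub>E B) \<subseteq> A \<rightarrow>\<^sub>E B" if "bij_betw f A A" for f
    using bij_betw_apply[OF that] by (auto simp: PiE_iff)
  show ?thesis
    by (rule bij_betw_byWitness[where f' = "\<lambda>k. restrict (k \<circ> \<tau>) A"])
      (use comp \<sigma> \<tau> image in auto)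
qed

lemma bij_betw_Collect_comp:
  assumes "bij_betw f A B"
  shows "bij_betw f {x \<in> A. P (f x)} {y \<in> B. P y}"
  using assms by (auto simp: bij_betw_def inj_on_def image_iff)

lemma mode_mset_precompose:
  assumes "bij_betw \<sigma> {..<n} {..<n}"
  shows "mode_mset n (restrict (k \<circ> \<sigma>) {0..<n}) = mode_mset n k"
proof -
  have "mode_mset n (restrict (k \<circ> \<sigma>) {0..<n}) = image_mset (k \<circ> \<sigma>) (mset_set {..<n})"
    unfolding mode_mset_def atLeast0LessThan by (rule image_mset_cong) simp
  also have "\<dots> = image_mset k (image_mset \<sigma> (mset_set {..<n}))"
    by (simp add: image_mset.compositionality)
  also have "image_mset \<sigma> (mset_set {..<n}) = mset_set {..<n}"
    using assms by (simp add: image_mset_mset_set bij_betw_def)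
  also have "image_mset k (mset_set {..<n}) = mode_mset n k"
    by (simp add: mode_mset_def atLeast0LessThan)
  finally show ?thesis .
qed

lemma path_weight_precompose:
  assumes \<sigma>: "bij_betw \<sigma> {..<n} {..<n}" and phase: "\<forall>a<n. \<forall>b<n. U a (\<sigma> b) = U a b * \<phi> a"
    and k: "k \<in> assignments n"
  shows "path_weight U n k =
    path_weight U n (restrict (k \<circ> \<sigma>) {0..<n}) * prod_mset (image_mset \<phi> (mode_mset n k))"
proof -
  have k\<sigma>: "k (\<sigma> b) < n" if "b < n" for b
    using k bij_betw_apply[OF \<sigma>] that by auto
  have "path_weight U n k = (\<Prod>b<n. U (k (\<sigma> b)) (\<sigma> b))"
    unfolding path_weight_def using prod.reindex_bij_betw[OF \<sigma>, of "\<lambda>b. U (k b) b"] by simp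
  also have "\<dots> = (\<Prod>b<n. U (k (\<sigma> b)) b * \<phi> (k (\<sigma> b)))"
    using phase k\<sigma> by (intro prod.cong) auto
  also have "\<dots> = (\<Prod>b<n. U (k (\<sigma> b)) b) * (\<Prod>b<n. \<phi> (k b))"
    using prod.reindex_bij_betw[OF \<sigma>, of "\<lambda>b. \<phi> (k b)"] by (simp add: prod.distrib)
  also have "(\<Prod>b<n. \<phi> (k b)) = prod_mset (image_mset \<phi> (mode_mset n k))"
    by (simp add: prod_unfold_prod_mset mode_mset_def image_mset.compositionality o_def atLeast0LessThan)
  finally show ?thesis
    by (simp add: path_weight_def)
qed

lemma sum_path_weight_precompose:
  assumes \<sigma>: "bij_betw \<sigma> {..<n} {..<n}" and phase: "\<forall>a<n. \<forall>b<n. U a (\<sigma> b) = U a b * \<phi> a"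
  shows "(\<Sum>k\<in>{k \<in> assignments n. mode_mset n k = S \<and> Q (restrict (k \<circ> \<sigma>) {0..<n})}. path_weight U n k)
    = prod_mset (image_mset \<phi> S) * (\<Sum>k\<in>{k \<in> assignments n. mode_mset n k = S \<and> Q k}. path_weight U n k)"
proof -
  let ?T = "\<lambda>k. restrict (k \<circ> \<sigma>) {0..<n}"
  have "bij_betw \<sigma> {0..<n} {0..<n}"
    using \<sigma> by (simp add: atLeast0LessThan)
  note T_bij = bij_betw_Collect_comp[OF bij_betw_precompose_PiE[OF this],
      where P = "\<lambda>k. mode_mset n k = S \<and> Q k"]
  have sets: "{k \<in> assignments n. mode_mset n k = S \<and> Q (?T k)} =
      {k \<in> assignments n. mode_mset n (?T k) = S \<and> Q (?T k)}"
    using mode_mset_precompose[OF \<sigma>] by simp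
  have "(\<Sum>k\<in>{k \<in> assignments n. mode_mset n k = S \<and> Q (?T k)}. path_weight U n k)
      = prod_mset (image_mset \<phi> S) * (\<Sum>k\<in>{k \<in> assignments n. mode_mset n k = S \<and> Q (?T k)}. path_weight U n (?T k))"
    by (simp add: sum_distrib_left path_weight_precompose[OF \<sigma> phase] mult.commute)
  also have "(\<Sum>k\<in>{k \<in> assignments n. mode_mset n k = S \<and> Q (?T k)}. path_weight U n (?T k))
      = (\<Sum>k\<in>{k \<in> assignments n. mode_mset n k = S \<and> Q k}. path_weight U n k)"
    unfolding sets by (rule sum.reindex_bij_betw[OF T_bij])
  finally show ?thesis .
qed

lemma pattern_amp_from_eq:
  assumes "column_phase_transitive U n" "pattern_amp U n S \<noteq> 0" "i < n" "i' < n"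
  shows "pattern_amp_from U n i S = pattern_amp_from U n i' S"
proof -
  obtain \<sigma> \<phi> where \<sigma>: "bij_betw \<sigma> {..<n} {..<n}" "\<sigma> i = i'"
    and phase: "\<forall>a<n. \<forall>b<n. U a (\<sigma> b) = U a b * \<phi> a"
    using assms(1,3,4) unfolding column_phase_transitive_def by blast
  have "pattern_amp U n S = prod_mset (image_mset \<phi> S) * pattern_amp U n S"
    using sum_path_weight_precompose[OF \<sigma>(1) phase, where Q = "\<lambda>_. True"] by (simp add: pattern_amp_def)
  then have "prod_mset (image_mset \<phi> S) = 1"
    using assms(2) by simp
  moreover have sets: "{k \<in> assignments n. mode_mset n k = S \<and> restrict (k \<circ> \<sigma>) {0..<n} i = 0}
      = {k \<in> assignments n. mode_mset n k = S \<and> k i' = 0}"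
    using \<sigma>(2) assms(3) by auto
  have "pattern_amp_from U n i' S = prod_mset (image_mset \<phi> S) * pattern_amp_from U n i S"
    unfolding pattern_amp_from_def
    using sum_path_weight_precompose[OF \<sigma>(1) phase, where Q = "\<lambda>k. k i = 0" and S = S, unfolded sets] .
  ultimately show ?thesis
    by simp
qed

lemma pattern_amp_eq_sum_from:
  assumes "count S 0 = 1"
  shows "pattern_amp U n S = (\<Sum>i<n. pattern_amp_from U n i S)"
proof -
  define F where "F = {k \<in> assignments n. mode_mset n k = S}"
  have fin: "finite F"
    using finite_PiE[of "{0..<n}" "\<lambda>_. {0..<n}"] unfolding F_def by simp
  have "pattern_amp_from U n i S = (\<Sum>k\<in>F. if k i = 0 then path_weight U n k else 0)" for i
  proof -
    have "{k \<in> assignments n. mode_mset n k = S \<and> k i = 0} = {k \<in> F. k i = 0}"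
      by (auto simp: F_def)
    then show ?thesis
      using sum.inter_filter[OF fin] by (simp add: pattern_amp_from_def)
  qed
  then have "(\<Sum>i<n. pattern_amp_from U n i S) = (\<Sum>k\<in>F. \<Sum>i<n. if k i = 0 then path_weight U n k else 0)"
    using sum.swap by simp
  also have "\<dots> = (\<Sum>k\<in>F. path_weight U n k)"
  proof (rule sum.cong[OF refl])
    fix k assume "k \<in> F"
    then have "count (mode_mset n k) 0 = 1"
      using assms by (simp add: F_def)
    then have "card {i \<in> {..<n}. k i = 0} = 1"
      by (simp add: count_mode_mset atLeast0LessThan)
    then show "(\<Sum>i<n. if k i = 0 then path_weight U n k else 0) = path_weight U n k"
      by (simp add: sum.inter_filter[symmetric])
  qed
  finally show ?thesis
    by (simp add: pattern_amp_def F_def)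
qed

lemma sum_norm_pattern_amp_from:
  assumes "column_phase_transitive U n" "S \<in> ideal_msets U n"
  shows "(\<Sum>i<n. (cmod (pattern_amp_from U n i S))\<^sup>2) = (cmod (pattern_amp U n S))\<^sup>2 / n"
proof (cases "n = 0")
  case False
  have S: "count S 0 = 1" "pattern_amp U n S \<noteq> 0"
    using assms(2) by (auto simp: ideal_msets_def)
  define a where "a = pattern_amp_from U n 0 S"
  have from_0: "pattern_amp_from U n i S = a" if "i < n" for i
    using pattern_amp_from_eq[OF assms(1) S(2) that] False by (simp add: a_def)
  then have "pattern_amp U n S = of_nat n * a"
    using pattern_amp_eq_sum_from[OF S(1), of U n] by simp
  moreover have "(\<Sum>i<n. (cmod (pattern_amp_from U n i S))\<^sup>2) = n * (cmod a)\<^sup>2"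
    using from_0 by simp
  ultimately show ?thesis
    using False by (simp add: norm_mult power2_eq_square)
qed simp

lemma sum_herald_error_prob_single_error:
  assumes "column_phase_transitive U n" "n > 0" "\<forall>i<n. c i \<ge> 1"
  shows "(\<Sum>i<n. herald_error_prob U n (single_error n i (c i))) = ideal_herald_rate U n / n"
proof -
  have "(\<Sum>i<n. herald_error_prob U n (single_error n i (c i)))
      = (\<Sum>i<n. \<Sum>S\<in>ideal_msets U n. mset_fact S * (cmod (pattern_amp_from U n i S))\<^sup>2)"
    using assms(2,3) by (simp add: herald_error_prob_single_error)
  also have "\<dots> = (\<Sum>S\<in>ideal_msets U n. mset_fact S * (\<Sum>i<n. (cmod (pattern_amp_from U n i S))\<^sup>2))"
    by (simp add: sum.swap[of _ "{..<n}"] sum_distrib_left)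
  also have "\<dots> = (\<Sum>S\<in>ideal_msets U n. mset_fact S * ((cmod (pattern_amp U n S))\<^sup>2 / n))"
    by (simp add: sum_norm_pattern_amp_from[OF assms(1)])
  also have "\<dots> = ideal_herald_rate U n / n"
    by (simp add: ideal_herald_rate_def sum_divide_distrib)
  finally show ?thesis .
qed

section \<open>Existence of ideal patterns\<close>

lemma mem_PiE_single_zero_iff:
  fixes n i :: nat and k :: "nat \<Rightarrow> nat"
  assumes "i < n"
  shows "k \<in> Pi\<^sub>E {0..<n} (\<lambda>b. if b = i then {0} else {1..<n}) \<longleftrightarrow>
    k \<in> {0..<n} \<rightarrow>\<^sub>E {0..<n} \<and> k i = 0 \<and> (\<forall>b<n. b \<noteq> i \<longrightarrow> k b \<noteq> 0)"
proof
  assume k: "k \<in> Pi\<^sub>E {0..<n} (\<lambda>b. if b = i then {0} else {1..<n})"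
  then have kb: "k b \<in> (if b = i then {0} else {1..<n})" if "b < n" for b
    using PiE_mem[OF k, of b] that by simp
  have "k \<in> {0..<n} \<rightarrow>\<^sub>E {0..<n}"
  proof (rule PiE_I)
    show "k b \<in> {0..<n}" if "b \<in> {0..<n}" for b
      using kb[of b] that assms by (auto split: if_splits)
    show "k b = undefined" if "b \<notin> {0..<n}" for b
      using PiE_arb[OF k that] .
  qed
  then show "k \<in> {0..<n} \<rightarrow>\<^sub>E {0..<n} \<and> k i = 0 \<and> (\<forall>b<n. b \<noteq> i \<longrightarrow> k b \<noteq> 0)"
    using kb assms by fastforce
next
  assume k: "k \<in> {0..<n} \<rightarrow>\<^sub>E {0..<n} \<and> k i = 0 \<and> (\<forall>b<n. b \<noteq> i \<longrightarrow> k b \<noteq> 0)"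
  show "k \<in> Pi\<^sub>E {0..<n} (\<lambda>b. if b = i then {0} else {1..<n})"
  proof (rule PiE_I)
    show "k b \<in> (if b = i then {0} else {1..<n})" if "b \<in> {0..<n}" for b
      using k PiE_mem[of k "{0..<n}" "\<lambda>_. {0..<n}" b] that by auto
    show "k b = undefined" if "b \<notin> {0..<n}" for b
      using k PiE_arb[of k "{0..<n}" "\<lambda>_. {0..<n}" b] that by blast
  qed
qed

lemma sum_path_weight_single_zero:
  "(\<Sum>k\<in>{k \<in> assignments n. count (mode_mset n k) 0 = 1}. path_weight U n k)
    = (\<Sum>i<n. \<Prod>b<n. \<Sum>a\<in>(if b = i then {0} else {1..<n}). U a b)"
proof -
  define P where "P i = Pi\<^sub>E {0..<n} (\<lambda>b. if b = i then {0} else {1..<n})" for i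
  have P_iff: "k \<in> P i \<longleftrightarrow> k \<in> assignments n \<and> k i = 0 \<and> (\<forall>b<n. b \<noteq> i \<longrightarrow> k b \<noteq> 0)"
    if "i < n" for i k
    unfolding P_def by (rule mem_PiE_single_zero_iff[OF that])
  have "{k \<in> assignments n. count (mode_mset n k) 0 = 1} = (\<Union>i<n. P i)"
  proof (intro set_eqI iffI)
    fix k assume "k \<in> {k \<in> assignments n. count (mode_mset n k) 0 = 1}"
    then have k: "k \<in> assignments n" "count (mode_mset n k) 0 = 1"
      by auto
    then obtain i where i: "i < n" "k i = 0" "\<forall>b<n. b \<noteq> i \<longrightarrow> k b \<noteq> 0"
      using count_mode_mset_0_eq_1_iff[THEN iffD1, OF k(2)] by blast
    then have "k \<in> P i"
      using P_iff[OF i(1)] k(1) by simp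
    then show "k \<in> (\<Union>i<n. P i)"
      using i(1) by blast
  next
    fix k assume "k \<in> (\<Union>i<n. P i)"
    then obtain i where i: "i < n" "k \<in> P i"
      by blast
    then have "k \<in> assignments n \<and> k i = 0 \<and> (\<forall>b<n. b \<noteq> i \<longrightarrow> k b \<noteq> 0)"
      using P_iff[OF i(1)] by blast
    moreover have "count (mode_mset n k) 0 = 1"
      using calculation i(1) by (intro count_mode_mset_0_eq_1_iff[THEN iffD2]) auto
    ultimately show "k \<in> {k \<in> assignments n. count (mode_mset n k) 0 = 1}"
      by simp
  qed
  moreover have "P i \<inter> P i' = {}" if "i < n" "i' < n" "i \<noteq> i'" for i i'
  proof -
    have "k \<notin> P i'" if "k \<in> P i" for k
      using P_iff[OF \<open>i < n\<close>, of k] P_iff[OF \<open>i' < n\<close>, of k] \<open>i \<noteq> i'\<close> \<open>i < n\<close> that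
      by auto
    then show ?thesis
      by blast
  qed
  moreover have "(\<Sum>k\<in>P i. path_weight U n k) = (\<Prod>b<n. \<Sum>a\<in>(if b = i then {0} else {1..<n}). U a b)"
    for i
    using prod_sum_PiE[of "{0..<n}" "\<lambda>b. if b = i then {0} else {1..<n}" "\<lambda>b a. U a b"]
    by (simp add: P_def path_weight_def atLeast0LessThan)
  moreover have "finite (P i)" for i
    by (simp add: P_def finite_PiE)
  ultimately show ?thesis
    by (simp add: sum.UNION_disjoint)
qed

lemma prod_single_zero_eq:
  fixes U :: "nat \<Rightarrow> nat \<Rightarrow> 'a::comm_semiring_1"
  assumes "i < n"
  shows "(\<Prod>b<n. \<Sum>a\<in>(if b = i then {0} else {1..<n}). U a b)
    = U 0 i * (\<Prod>b\<in>{..<n} - {i}. \<Sum>a\<in>{1..<n}. U a b)"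
proof -
  have "(\<Prod>b<n. \<Sum>a\<in>(if b = i then {0} else {1..<n}). U a b)
      = (\<Sum>a\<in>{0}. U a i) * (\<Prod>b\<in>{..<n} - {i}. \<Sum>a\<in>(if b = i then {0} else {1..<n}). U a b)"
    using assms by (subst prod.remove[of _ i]) auto
  also have "(\<Prod>b\<in>{..<n} - {i}. \<Sum>a\<in>(if b = i then {0} else {1..<n}). U a b)
      = (\<Prod>b\<in>{..<n} - {i}. \<Sum>a\<in>{1..<n}. U a b)"
    by (intro prod.cong) auto
  finally show ?thesis
    by simp
qed

text \<open>The sum below equals \<open>v\<^sup>2 (-v)\<^bsup>n-2\<^esup> n (n - 2)\<close>; it vanishes for \<open>n = 2\<close>,
  which is why the theorem needs \<open>n > 2\<close>.\<close>

lemma sum_prod_single_zero_neq_0: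
  fixes U :: "nat \<Rightarrow> nat \<Rightarrow> complex"
  assumes n: "n \<ge> 3" and row_0: "\<forall>b<n. U 0 b = v" and "v \<noteq> 0"
    and column: "\<forall>b<n. (\<Sum>a<n. U a b) = (if b = 0 then of_nat n * v else 0)"
  shows "(\<Sum>i<n. \<Prod>b<n. \<Sum>a\<in>(if b = i then {0} else {1..<n}). U a b) \<noteq> 0"
proof -
  define m where "m = n - 2"
  have m: "n = Suc (Suc m)"
    using n by (simp add: m_def)
  define t where "t b = (\<Sum>a\<in>{1..<n}. U a b)" for b
  have t: "t b = (if b = 0 then of_nat n * v else 0) - v" if "b < n" for b
  proof -
    have "{..<n} = insert 0 {1..<n}"
      using n by auto
    then have "(\<Sum>a<n. U a b) = U 0 b + t b"
      by (simp add: t_def)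
    then show ?thesis
      using column row_0 that by auto
  qed
  define X where "X i = (\<Prod>b<n. \<Sum>a\<in>(if b = i then {0} else {1..<n}). U a b)" for i
  have X_0: "X 0 = v * (- v) ^ Suc m"
  proof -
    have "(\<Prod>b\<in>{..<n} - {0}. t b) = (\<Prod>b\<in>{..<n} - {0}. - v)"
      using t by (intro prod.cong) auto
    then show ?thesis
      using prod_single_zero_eq[of 0 n U] row_0 m by (simp add: X_def t_def)
  qed
  have X_i: "X i = v * ((of_nat n * v - v) * (- v) ^ m)" if "i \<in> {..<n} - {0}" for i
  proof -
    have "(\<Prod>b\<in>{..<n} - {i}. t b) = t 0 * (\<Prod>b\<in>{..<n} - {i} - {0}. t b)"
      using that m by (subst prod.remove[of _ 0]) auto
    also have "(\<Prod>b\<in>{..<n} - {i} - {0}. t b) = (\<Prod>b\<in>{..<n} - {i} - {0}. - v)"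
      using t by (intro prod.cong) auto
    also have "\<dots> = (- v) ^ m"
      using that m by (simp add: card_Diff_singleton_if)
    finally show ?thesis
      using prod_single_zero_eq[of i n U] row_0 t[of 0] that m by (simp add: X_def t_def)
  qed
  have "(\<Sum>i<n. X i) = X 0 + (\<Sum>i\<in>{..<n} - {0}. X i)"
    using n by (simp add: sum.remove)
  also have "(\<Sum>i\<in>{..<n} - {0}. X i) = (\<Sum>i\<in>{..<n} - {0}. v * ((of_nat n * v - v) * (- v) ^ m))"
    by (rule sum.cong[OF refl X_i])
  also have "\<dots> = of_nat (Suc m) * (v * ((of_nat n * v - v) * (- v) ^ m))"
    using m by simp
  also have "X 0 + \<dots> = v * v * (- v) ^ m * of_nat (m * (m + 2))"
    using X_0 m by (simp add: algebra_simps)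
  also have "\<dots> \<noteq> 0"
  proof -
    have "m * (m + 2) \<noteq> 0"
      using m n by simp
    then have "(of_nat (m * (m + 2)) :: complex) \<noteq> 0"
      by (simp only: of_nat_eq_0_iff not_False_eq_True)
    then show ?thesis
      using \<open>v \<noteq> 0\<close> by (metis mult_eq_0_iff power_eq_0_iff neg_equal_0_iff_equal)
  qed
  finally show ?thesis
    by (simp only: X_def not_False_eq_True)
qed

lemma ideal_msets_nonempty:
  assumes "(\<Sum>k\<in>{k \<in> assignments n. count (mode_mset n k) 0 = 1}. path_weight U n k) \<noteq> 0"
  shows "ideal_msets U n \<noteq> {}"
proof
  assume no_ideal: "ideal_msets U n = {}"
  let ?K = "{k \<in> assignments n. count (mode_mset n k) 0 = 1}"
  have "finite ?K"
    by (simp add: finite_PiE)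
  then have "(\<Sum>k\<in>?K. path_weight U n k) = (\<Sum>S\<in>mode_mset n ` ?K. \<Sum>k\<in>{k \<in> ?K. mode_mset n k = S}. path_weight U n k)"
    by (rule sum.image_gen)
  also have "\<dots> = 0"
  proof (rule sum.neutral, rule ballI)
    fix S assume S: "S \<in> mode_mset n ` ?K"
    then have "count S 0 = 1" "S \<in> mode_mset n ` assignments n"
      by auto
    then have "pattern_amp U n S = 0"
      using no_ideal by (auto simp: ideal_msets_def)
    moreover have "{k \<in> ?K. mode_mset n k = S} = {k \<in> assignments n. mode_mset n k = S}"
      using \<open>count S 0 = 1\<close> by auto
    ultimately show "(\<Sum>k\<in>{k \<in> ?K. mode_mset n k = S}. path_weight U n k) = 0"
      by (simp add: pattern_amp_def)
  qed
  finally show False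
    using assms by simp
qed

lemma ideal_herald_rate_pos:
  assumes "ideal_msets U n \<noteq> {}"
  shows "ideal_herald_rate U n > 0"
  unfolding ideal_herald_rate_def
proof (rule sum_pos[OF finite_ideal_msets assms])
  fix S assume "S \<in> ideal_msets U n"
  then show "0 < mset_fact S * (cmod (pattern_amp U n S))\<^sup>2"
    using mset_fact_pos[of S] by (simp add: ideal_msets_def)
qed

lemma ideal_herald_rate_fourier_tensor_pos:
  assumes "\<forall>m\<in>set ns. m > 0" "prod_list ns \<ge> 3"
  shows "ideal_herald_rate (fourier_tensor ns) (prod_list ns) > 0"
proof -
  define n where "n = prod_list ns"
  define v where "v = 1 / complex_of_real (sqrt (real n))"
  have "n \<ge> 3"
    using assms(2) by (simp add: n_def)
  moreover have "\<forall>b<n. fourier_tensor ns 0 b = v"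
    by (simp add: fourier_tensor_row_0 v_def n_def)
  moreover have "v \<noteq> 0"
    using \<open>n \<ge> 3\<close> by (simp add: v_def)
  moreover have "of_nat n * v = complex_of_real (real n / sqrt (real n))"
    by (simp add: v_def)
  then have "complex_of_real (sqrt (real n)) = of_nat n * v"
    by (simp add: real_div_sqrt)
  then have "\<forall>b<n. (\<Sum>a<n. fourier_tensor ns a b) = (if b = 0 then of_nat n * v else 0)"
    using fourier_tensor_column_sum[OF assms(1)] by (simp add: n_def)
  ultimately have "(\<Sum>i<n. \<Prod>b<n. \<Sum>a\<in>(if b = i then {0} else {1..<n}). fourier_tensor ns a b) \<noteq> 0"
    by (rule sum_prod_single_zero_neq_0)
  then have "(\<Sum>k\<in>{k \<in> assignments n. count (mode_mset n k) 0 = 1}. path_weight (fourier_tensor ns) n k) \<noteq> 0"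
    unfolding sum_path_weight_single_zero .
  then show ?thesis
    using ideal_herald_rate_pos[OF ideal_msets_nonempty] by (simp add: n_def)
qed
section \<open>Expansion in the error probability\<close>

text \<open>\<open>\<rho>\<^sup>(\<^sup>n\<^sup>)(\<epsilon>)\<close> with weight \<open>w\<close> for each error label: \<open>w = 1 / R\<close> in the uniform random source
  model and \<open>w = 1\<close> in the orthogonal-bad-bits limit.\<close>

definition noise_prob :: "nat \<Rightarrow> real \<Rightarrow> real \<Rightarrow> (nat \<Rightarrow> nat) \<Rightarrow> real" where
  "noise_prob n w \<epsilon> j = (\<Prod>i<n. if j i = 0 then 1 - \<epsilon> else \<epsilon> * w)"

definition num_errors :: "nat \<Rightarrow> (nat \<Rightarrow> nat) \<Rightarrow> nat" where
  "num_errors n j = card {i \<in> {..<n}. j i \<noteq> 0}"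

lemma num_errors_eq_0_iff: "num_errors n j = 0 \<longleftrightarrow> (\<forall>i<n. j i = 0)"
  by (auto simp: num_errors_def)

lemma noise_prob_eq_power:
  "noise_prob n w \<epsilon> j = (\<epsilon> * w) ^ num_errors n j * (1 - \<epsilon>) ^ (n - num_errors n j)"
proof -
  have "{..<n} - {i \<in> {..<n}. j i \<noteq> 0} = {i \<in> {..<n}. j i = 0}"
    by auto
  then have "card {i \<in> {..<n}. j i = 0} = n - num_errors n j"
    unfolding num_errors_def by (metis (no_types, lifting) card_Diff_subset card_lessThan
        finite_subset mem_Collect_eq subsetI finite_lessThan)
  then show ?thesis
    by (simp add: noise_prob_def prod.If_cases num_errors_def Int_def mult.commute)
qed

lemma noise_prob_bounds:
  assumes "0 \<le> \<epsilon>" "\<epsilon> \<le> 1" "0 \<le> w" "w \<le> 1" "k \<le> num_errors n j"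
  shows "0 \<le> noise_prob n w \<epsilon> j" "noise_prob n w \<epsilon> j \<le> \<epsilon> ^ k"
proof -
  have w: "0 \<le> \<epsilon> * w" "\<epsilon> * w \<le> \<epsilon>"
    using assms by (auto simp: mult_left_le)
  then show "0 \<le> noise_prob n w \<epsilon> j"
    using assms by (simp add: noise_prob_eq_power)
  have "(\<epsilon> * w) ^ num_errors n j \<le> \<epsilon> ^ num_errors n j"
    using w by (intro power_mono) auto
  also have "\<dots> \<le> \<epsilon> ^ k"
    using assms by (intro power_decreasing) auto
  finally show "noise_prob n w \<epsilon> j \<le> \<epsilon> ^ k"
    using assms w by (simp add: noise_prob_eq_power mult_le_one power_le_one mult_le_cancel_left1
        order_trans[OF mult_right_le_one_le])
qed

lemma abs_one_minus_power_mult_le: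
  fixes \<epsilon> x :: real
  assumes "0 \<le> \<epsilon>" "\<epsilon> \<le> 1"
  shows "\<bar>(1 - (1 - \<epsilon>) ^ m) * x\<bar> \<le> real m * \<bar>x\<bar> * \<epsilon>"
proof -
  have "0 \<le> 1 - (1 - \<epsilon>) ^ m"
    using assms by (simp add: power_le_one)
  moreover have "1 + real m * (- \<epsilon>) \<le> (1 + (- \<epsilon>)) ^ m"
    using assms by (intro Bernoulli_inequality) simp
  then have "(1 - (1 - \<epsilon>) ^ m) * \<bar>x\<bar> \<le> (real m * \<epsilon>) * \<bar>x\<bar>"
    by (intro mult_right_mono) simp_all
  ultimately show ?thesis
    by (simp add: abs_mult mult_ac)
qed

lemma eventually_at_right_0_unit: "\<forall>\<^sub>F \<epsilon> in at_right (0::real). 0 < \<epsilon> \<and> \<epsilon> < 1"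
  unfolding eventually_at_right_field by (intro exI[of _ 1]) auto

lemma abs_sum_noise_prob_le:
  assumes "0 \<le> \<epsilon>" "\<epsilon> \<le> 1" "0 \<le> w" "w \<le> 1"
    and "\<forall>j\<in>A. F j \<noteq> 0 \<longrightarrow> k \<le> num_errors n j"
  shows "\<bar>\<Sum>j\<in>A. noise_prob n w \<epsilon> j * F j\<bar> \<le> \<epsilon> ^ k * (\<Sum>j\<in>A. \<bar>F j\<bar>)"
proof -
  have "\<bar>noise_prob n w \<epsilon> j * F j\<bar> \<le> \<epsilon> ^ k * \<bar>F j\<bar>" if "j \<in> A" for j
    using noise_prob_bounds[OF assms(1-4), of k n j] assms(5) that
    by (cases "F j = 0") (simp_all add: abs_mult mult_right_mono)
  then have "(\<Sum>j\<in>A. \<bar>noise_prob n w \<epsilon> j * F j\<bar>) \<le> \<epsilon> ^ k * (\<Sum>j\<in>A. \<bar>F j\<bar>)"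
    by (simp add: sum_distrib_left sum_mono)
  then show ?thesis
    by (rule order_trans[OF sum_abs])
qed

lemma noise_mixture_zeroth_order:
  fixes F :: "(nat \<Rightarrow> nat) \<Rightarrow> real"
  assumes "finite J" "j0 \<in> J" "\<forall>i<n. j0 i = 0" "\<forall>j\<in>J. (\<forall>i<n. j i = 0) \<longrightarrow> j = j0"
    and "0 \<le> w" "w \<le> 1"
  shows "(\<lambda>\<epsilon>. (\<Sum>j\<in>J. noise_prob n w \<epsilon> j * F j) - F j0) \<in> O[at_right 0](\<lambda>\<epsilon>. \<epsilon>)"
proof (rule bigoI)
  show "\<forall>\<^sub>F \<epsilon> in at_right 0. norm ((\<Sum>j\<in>J. noise_prob n w \<epsilon> j * F j) - F j0)
      \<le> (real n * \<bar>F j0\<bar> + (\<Sum>j\<in>J. \<bar>F j\<bar>)) * norm \<epsilon>"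
    using eventually_at_right_0_unit
  proof eventually_elim
    case (elim \<epsilon>)
    then have \<epsilon>: "0 \<le> \<epsilon>" "\<epsilon> \<le> 1"
      by auto
    define A where "A = (1 - (1 - \<epsilon>) ^ n) * F j0"
    define B where "B = (\<Sum>j\<in>J - {j0}. noise_prob n w \<epsilon> j * F j)"
    have "num_errors n j0 = 0"
      using assms(3) by (simp add: num_errors_eq_0_iff)
    then have "noise_prob n w \<epsilon> j0 = (1 - \<epsilon>) ^ n"
      by (simp add: noise_prob_eq_power)
    then have split: "(\<Sum>j\<in>J. noise_prob n w \<epsilon> j * F j) - F j0 = B - A"
      using assms(1,2) by (simp add: A_def B_def sum.remove algebra_simps)
    have "\<bar>A\<bar> \<le> real n * \<bar>F j0\<bar> * \<epsilon>"
      unfolding A_def by (rule abs_one_minus_power_mult_le[OF \<epsilon>])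
    moreover have "\<bar>B\<bar> \<le> (\<Sum>j\<in>J. \<bar>F j\<bar>) * \<epsilon>"
    proof -
      have "\<forall>j\<in>J - {j0}. F j \<noteq> 0 \<longrightarrow> 1 \<le> num_errors n j"
      proof (intro ballI impI)
        fix j assume "j \<in> J - {j0}"
        then have "num_errors n j \<noteq> 0"
          using assms(4) num_errors_eq_0_iff by blast
        then show "1 \<le> num_errors n j"
          by simp
      qed
      then have "\<bar>B\<bar> \<le> \<epsilon> ^ 1 * (\<Sum>j\<in>J - {j0}. \<bar>F j\<bar>)"
        unfolding B_def by (rule abs_sum_noise_prob_le[OF \<epsilon> assms(5,6)])
      also have "\<dots> \<le> \<epsilon> * (\<Sum>j\<in>J. \<bar>F j\<bar>)"
        using assms(1) \<epsilon> by simp (intro mult_left_mono sum_mono2, auto)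
      finally show ?thesis
        by (simp add: mult.commute)
    qed
    ultimately show ?case
      unfolding real_norm_def split
      using abs_triangle_ineq4[of B A] \<epsilon> by (simp add: distrib_right)
  qed
qed

lemma noise_mixture_first_order:
  fixes F :: "(nat \<Rightarrow> nat) \<Rightarrow> real"
  assumes "finite J" "\<forall>j\<in>J. F j \<noteq> 0 \<longrightarrow> num_errors n j \<noteq> 0" "0 \<le> w" "w \<le> 1"
  shows "(\<lambda>\<epsilon>. (\<Sum>j\<in>J. noise_prob n w \<epsilon> j * F j) - \<epsilon> * w * (\<Sum>j\<in>{j \<in> J. num_errors n j = 1}. F j))
    \<in> O[at_right 0](\<lambda>\<epsilon>. \<epsilon>\<^sup>2)"
proof (rule bigoI)
  define J1 where "J1 = {j \<in> J. num_errors n j = 1}"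
  show "\<forall>\<^sub>F \<epsilon> in at_right 0. norm ((\<Sum>j\<in>J. noise_prob n w \<epsilon> j * F j) - \<epsilon> * w * (\<Sum>j\<in>J1. F j))
      \<le> (real n * \<bar>\<Sum>j\<in>J1. F j\<bar> + (\<Sum>j\<in>J. \<bar>F j\<bar>)) * norm (\<epsilon>\<^sup>2)"
    using eventually_at_right_0_unit
  proof eventually_elim
    case (elim \<epsilon>)
    then have \<epsilon>: "0 \<le> \<epsilon>" "\<epsilon> \<le> 1"
      by auto
    define S where "S = (\<Sum>j\<in>J1. F j)"
    define A where "A = \<epsilon> * w * ((1 - (1 - \<epsilon>) ^ (n - 1)) * S)"
    define B where "B = (\<Sum>j\<in>J - J1. noise_prob n w \<epsilon> j * F j)"
    have "(\<Sum>j\<in>J. noise_prob n w \<epsilon> j * F j) = (\<Sum>j\<in>J1. noise_prob n w \<epsilon> j * F j) + B"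
      using assms(1) sum.subset_diff[of J1 J] by (simp add: B_def J1_def add.commute)
    also have "(\<Sum>j\<in>J1. noise_prob n w \<epsilon> j * F j) = \<epsilon> * w * (1 - \<epsilon>) ^ (n - 1) * S"
      by (simp add: S_def J1_def noise_prob_eq_power sum_distrib_left)
    finally have split: "(\<Sum>j\<in>J. noise_prob n w \<epsilon> j * F j) - \<epsilon> * w * S = B - A"
      by (simp add: A_def algebra_simps)
    have "\<bar>A\<bar> = \<epsilon> * w * \<bar>(1 - (1 - \<epsilon>) ^ (n - 1)) * S\<bar>"
      using \<epsilon> assms(3) by (simp add: A_def abs_mult)
    also have "\<dots> \<le> \<epsilon> * 1 * (real (n - 1) * \<bar>S\<bar> * \<epsilon>)"
      using \<epsilon> assms(3,4) by (intro mult_mono abs_one_minus_power_mult_le) auto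
    also have "\<dots> \<le> real n * \<bar>S\<bar> * \<epsilon>\<^sup>2"
    proof -
      have "real (n - 1) * (\<bar>S\<bar> * \<epsilon>\<^sup>2) \<le> real n * (\<bar>S\<bar> * \<epsilon>\<^sup>2)"
        by (intro mult_right_mono) auto
      then show ?thesis
        by (simp add: power2_eq_square mult_ac)
    qed
    finally have "\<bar>A\<bar> \<le> real n * \<bar>S\<bar> * \<epsilon>\<^sup>2" .
    moreover have "\<bar>B\<bar> \<le> (\<Sum>j\<in>J. \<bar>F j\<bar>) * \<epsilon>\<^sup>2"
    proof -
      have "\<forall>j\<in>J - J1. F j \<noteq> 0 \<longrightarrow> 2 \<le> num_errors n j"
        using assms(2) by (auto simp: J1_def)
      then have "\<bar>B\<bar> \<le> \<epsilon>\<^sup>2 * (\<Sum>j\<in>J - J1. \<bar>F j\<bar>)"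
        unfolding B_def by (rule abs_sum_noise_prob_le[OF \<epsilon> assms(3,4)])
      also have "\<dots> \<le> \<epsilon>\<^sup>2 * (\<Sum>j\<in>J. \<bar>F j\<bar>)"
        using assms(1) by (intro mult_left_mono sum_mono2) auto
      finally show ?thesis
        by (simp add: mult.commute)
    qed
    ultimately show ?case
      unfolding real_norm_def S_def[symmetric] split
      using abs_triangle_ineq4[of B A] by (simp add: distrib_right)
  qed
qed

lemma quotient_expansion:
  fixes e h :: "real \<Rightarrow> real"
  assumes T: "T > 0"
    and h: "(\<lambda>\<epsilon>. h \<epsilon> - T) \<in> O[at_right 0](\<lambda>\<epsilon>. \<epsilon>)"
    and e: "(\<lambda>\<epsilon>. e \<epsilon> - c * \<epsilon> * T) \<in> O[at_right 0](\<lambda>\<epsilon>. \<epsilon>\<^sup>2)"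
  shows "(\<lambda>\<epsilon>. e \<epsilon> / h \<epsilon> - c * \<epsilon>) \<in> O[at_right 0](\<lambda>\<epsilon>. \<epsilon>\<^sup>2)"
proof -
  obtain C where "\<forall>\<^sub>F \<epsilon> in at_right 0. norm (h \<epsilon> - T) \<le> C * norm \<epsilon>"
    using landau_o.bigE[OF h] by blast
  then have "((\<lambda>\<epsilon>. h \<epsilon> - T) \<longlongrightarrow> 0) (at_right 0)"
    using tendsto_0_le[OF tendsto_ident_at, where g = "\<lambda>\<epsilon>. h \<epsilon> - T" and K = C] by (simp add: mult.commute)
  then have h_pos: "\<forall>\<^sub>F \<epsilon> in at_right 0. h \<epsilon> > T / 2"
    using T by (intro order_tendstoD(1)) (auto simp: LIM_zero_iff)
  have inverse: "(\<lambda>\<epsilon>. 1 / h \<epsilon>) \<in> O[at_right 0](\<lambda>_. 1)"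
  proof (rule bigoI)
    show "\<forall>\<^sub>F \<epsilon> in at_right 0. norm (1 / h \<epsilon>) \<le> 2 / T * norm (1::real)"
      using h_pos
    proof eventually_elim
      case (elim \<epsilon>)
      then show ?case
        using T by (simp add: field_simps)
    qed
  qed
  have "(\<lambda>\<epsilon>. c * \<epsilon>) \<in> O[at_right 0](\<lambda>\<epsilon>. \<epsilon>)"
    by (intro bigoI[where c = "\<bar>c\<bar>"]) (simp add: abs_mult)
  from landau_o.big.mult[OF this h]
  have "(\<lambda>\<epsilon>. c * \<epsilon> * (h \<epsilon> - T)) \<in> O[at_right 0](\<lambda>\<epsilon>. \<epsilon>\<^sup>2)"
    by (simp add: power2_eq_square)
  from landau_o.big.mult[OF sum_in_bigo(2)[OF e this] inverse]
  have product: "(\<lambda>\<epsilon>. (e \<epsilon> - c * \<epsilon> * T - c * \<epsilon> * (h \<epsilon> - T)) * (1 / h \<epsilon>)) \<in> O[at_right 0](\<lambda>\<epsilon>. \<epsilon>\<^sup>2)"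
    by simp
  have "\<forall>\<^sub>F \<epsilon> in at_right 0.
      (e \<epsilon> - c * \<epsilon> * T - c * \<epsilon> * (h \<epsilon> - T)) * (1 / h \<epsilon>) = e \<epsilon> / h \<epsilon> - c * \<epsilon>"
    using h_pos
  proof eventually_elim
    case (elim \<epsilon>)
    then show ?case
      using T by (simp add: field_simps)
  qed
  from landau_o.big.in_cong[OF this] product show ?thesis
    by simp
qed

lemma error_rate_eq:
  "error_rate U n J p = (\<Sum>j\<in>J. p j * herald_error_prob U n j) / (\<Sum>j\<in>J. p j * herald_prob U n j)"
  by (simp add: error_rate_def error_joint_def heralding_rate_def herald_prob_def herald_error_prob_def)

theorem error_rate_noise_expansion:
  assumes U: "column_phase_transitive U n" and T: "ideal_herald_rate U n > 0" and n: "n > 0"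
    and J: "finite J" "J \<subseteq> extensional {0..<n}" "(\<lambda>_\<in>{0..<n}. 0) \<in> J"
    and w: "0 \<le> w" "w \<le> 1"
    and single: "w * (\<Sum>j\<in>{j \<in> J. num_errors n j = 1}. herald_error_prob U n j) = ideal_herald_rate U n / n"
  shows "(\<lambda>\<epsilon>. error_rate U n J (noise_prob n w \<epsilon>) - \<epsilon> / n) \<in> O[at_right 0](\<lambda>\<epsilon>. \<epsilon>\<^sup>2)"
proof -
  let ?j0 = "\<lambda>_\<in>{0..<n}. 0"
  have "j = ?j0" if "j \<in> J" "\<forall>i<n. j i = 0" for j
  proof
    fix x
    show "j x = ?j0 x"
      using that J(2) by (cases "x < n") (auto simp: extensional_def)
  qed
  then have "(\<lambda>\<epsilon>. (\<Sum>j\<in>J. noise_prob n w \<epsilon> j * herald_prob U n j) - herald_prob U n ?j0)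
      \<in> O[at_right 0](\<lambda>\<epsilon>. \<epsilon>)"
    by (intro noise_mixture_zeroth_order J w) auto
  moreover have "herald_prob U n ?j0 = ideal_herald_rate U n"
    using n by (simp add: herald_prob_error_free)
  ultimately have h: "(\<lambda>\<epsilon>. (\<Sum>j\<in>J. noise_prob n w \<epsilon> j * herald_prob U n j) - ideal_herald_rate U n)
      \<in> O[at_right 0](\<lambda>\<epsilon>. \<epsilon>)"
    by simp
  have "(\<lambda>\<epsilon>. (\<Sum>j\<in>J. noise_prob n w \<epsilon> j * herald_error_prob U n j)
      - \<epsilon> * w * (\<Sum>j\<in>{j \<in> J. num_errors n j = 1}. herald_error_prob U n j)) \<in> O[at_right 0](\<lambda>\<epsilon>. \<epsilon>\<^sup>2)"
    using herald_error_prob_error_free num_errors_eq_0_iff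
    by (intro noise_mixture_first_order J(1) w) blast
  then have e: "(\<lambda>\<epsilon>. (\<Sum>j\<in>J. noise_prob n w \<epsilon> j * herald_error_prob U n j)
      - 1 / real n * \<epsilon> * ideal_herald_rate U n) \<in> O[at_right 0](\<lambda>\<epsilon>. \<epsilon>\<^sup>2)"
    using single by (simp add: mult.assoc)
  from quotient_expansion[OF T h e] show ?thesis
    by (simp add: error_rate_eq)
qed

lemma num_errors_single_error:
  assumes "i < n" "c \<ge> 1"
  shows "num_errors n (single_error n i c) = 1"
proof -
  have "{b \<in> {..<n}. single_error n i c b \<noteq> 0} = {i}"
    using assms by (auto simp: single_error_def)
  then show ?thesis
    by (simp add: num_errors_def)
qed

lemma single_error_inj:
  assumes "single_error n i c = single_error n i' c'" "i < n" "c \<ge> 1"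
  shows "i = i' \<and> c = c'"
proof -
  have "single_error n i c i = single_error n i' c' i"
    using assms(1) by simp
  then show ?thesis
    using assms(2,3) by (auto simp: single_error_def split: if_splits)
qed

lemma num_errors_eq_1_imp_single_error:
  assumes "num_errors n j = 1" "j \<in> extensional {0..<n}"
  obtains i where "i < n" "j i \<noteq> 0" "j = single_error n i (j i)"
proof -
  obtain i where i: "{b \<in> {..<n}. j b \<noteq> 0} = {i}"
    using assms(1) card_1_singletonE by (auto simp: num_errors_def)
  then have "i < n" "j i \<noteq> 0"
    by auto
  moreover have "j = single_error n i (j i)"
  proof
    fix b
    show "j b = single_error n i (j i) b"
    proof (cases "b < n")
      case True
      then have "b \<in> {b \<in> {..<n}. j b \<noteq> 0} \<longleftrightarrow> b = i"
        unfolding i by simp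
      then show ?thesis
        using True by (auto simp: single_error_def)
    next
      case False
      then show ?thesis
        using assms(2) by (simp add: single_error_def extensional_def)
    qed
  qed
  ultimately show ?thesis
    using that by blast
qed

lemma urs_labels_single_errors:
  "{j \<in> urs_labels n R. num_errors n j = 1} = (\<lambda>(i, c). single_error n i c) ` ({..<n} \<times> {1..R})"
proof (intro set_eqI iffI)
  fix j assume "j \<in> {j \<in> urs_labels n R. num_errors n j = 1}"
  then have j: "j \<in> urs_labels n R" "num_errors n j = 1"
    by auto
  then obtain i where i: "i < n" "j i \<noteq> 0" "j = single_error n i (j i)"
    by (elim num_errors_eq_1_imp_single_error) (auto simp: urs_labels_def PiE_def)
  moreover have "j i \<in> {1..R}"
    using j(1) i(1,2) by (auto simp: urs_labels_def)
  ultimately show "j \<in> (\<lambda>(i, c). single_error n i c) ` ({..<n} \<times> {1..R})"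
    by (auto intro!: image_eqI[of _ _ "(i, j i)"])
next
  fix j assume "j \<in> (\<lambda>(i, c). single_error n i c) ` ({..<n} \<times> {1..R})"
  then obtain i c where ic: "i < n" "c \<in> {1..R}" "j = single_error n i c"
    by auto
  then have "j \<in> urs_labels n R"
    by (auto simp: urs_labels_def single_error_def)
  moreover have "num_errors n j = 1"
    using ic num_errors_single_error by simp
  ultimately show "j \<in> {j \<in> urs_labels n R. num_errors n j = 1}"
    by simp
qed

lemma obb_labels_single_errors:
  "{j \<in> obb_labels n. num_errors n j = 1} = (\<lambda>i. single_error n i (Suc i)) ` {..<n}"
proof (intro set_eqI iffI)
  fix j assume "j \<in> {j \<in> obb_labels n. num_errors n j = 1}"
  then have j: "j \<in> obb_labels n" "num_errors n j = 1"
    by auto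
  then obtain i where i: "i < n" "j i \<noteq> 0" "j = single_error n i (j i)"
    by (elim num_errors_eq_1_imp_single_error) (auto simp: obb_labels_def PiE_def)
  moreover have "j i = Suc i"
    using PiE_mem[OF j(1)[unfolded obb_labels_def], of i] i(1,2) by simp
  ultimately show "j \<in> (\<lambda>i. single_error n i (Suc i)) ` {..<n}"
    by auto
next
  fix j assume "j \<in> (\<lambda>i. single_error n i (Suc i)) ` {..<n}"
  then obtain i where i: "i < n" "j = single_error n i (Suc i)"
    by auto
  then have "j \<in> obb_labels n"
    by (auto simp: obb_labels_def single_error_def)
  moreover have "num_errors n j = 1"
    using i num_errors_single_error by simp
  ultimately show "j \<in> {j \<in> obb_labels n. num_errors n j = 1}"
    by simp
qed

lemma error_rate_urs_expansion:
  assumes U: "column_phase_transitive U n" and T: "ideal_herald_rate U n > 0" and n: "n > 0"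
    and R: "R \<ge> 1"
  shows "(\<lambda>\<epsilon>. error_rate U n (urs_labels n R) (urs_prob n R \<epsilon>) - \<epsilon> / n) \<in> O[at_right 0](\<lambda>\<epsilon>. \<epsilon>\<^sup>2)"
proof -
  let ?single = "\<lambda>(i, c). single_error n i c"
  have "inj_on ?single ({..<n} \<times> {1..R})"
    by (auto intro!: inj_onI dest: single_error_inj)
  then have "(\<Sum>j\<in>{j \<in> urs_labels n R. num_errors n j = 1}. herald_error_prob U n j)
      = (\<Sum>(i, c)\<in>{..<n} \<times> {1..R}. herald_error_prob U n (single_error n i c))"
    by (rule sum.reindex_cong[OF _ urs_labels_single_errors]) auto
  also have "\<dots> = (\<Sum>c\<in>{1..R}. \<Sum>i<n. herald_error_prob U n (single_error n i c))"
    by (simp add: sum.cartesian_product[symmetric] sum.swap[of _ "{..<n}"])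
  also have "\<dots> = real R * (ideal_herald_rate U n / n)"
    using sum_herald_error_prob_single_error[OF U n, of "\<lambda>_. _"] by simp
  finally have single: "1 / real R * (\<Sum>j\<in>{j \<in> urs_labels n R. num_errors n j = 1}. herald_error_prob U n j)
      = ideal_herald_rate U n / n"
    using R by simp
  have prob: "urs_prob n R \<epsilon> = noise_prob n (1 / real R) \<epsilon>" for \<epsilon>
    by (simp add: urs_prob_def noise_prob_def fun_eq_iff cong: if_cong)
  have "finite (urs_labels n R)" "urs_labels n R \<subseteq> extensional {0..<n}" "(\<lambda>_\<in>{0..<n}. 0) \<in> urs_labels n R"
    by (auto simp: urs_labels_def finite_PiE PiE_iff)
  from error_rate_noise_expansion[OF U T n this _ _ single] R show ?thesis
    unfolding prob by simp
qed

lemma error_rate_obb_expansion: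
  assumes U: "column_phase_transitive U n" and T: "ideal_herald_rate U n > 0" and n: "n > 0"
  shows "(\<lambda>\<epsilon>. error_rate U n (obb_labels n) (obb_prob n \<epsilon>) - \<epsilon> / n) \<in> O[at_right 0](\<lambda>\<epsilon>. \<epsilon>\<^sup>2)"
proof -
  let ?single = "\<lambda>i. single_error n i (Suc i)"
  have "inj_on ?single {..<n}"
    by (auto intro!: inj_onI dest: single_error_inj)
  then have "(\<Sum>j\<in>{j \<in> obb_labels n. num_errors n j = 1}. herald_error_prob U n j)
      = (\<Sum>i<n. herald_error_prob U n (single_error n i (Suc i)))"
    by (rule sum.reindex_cong[OF _ obb_labels_single_errors]) auto
  also have "\<dots> = ideal_herald_rate U n / n"
    using sum_herald_error_prob_single_error[OF U n, of Suc] by simp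
  finally have single: "1 * (\<Sum>j\<in>{j \<in> obb_labels n. num_errors n j = 1}. herald_error_prob U n j)
      = ideal_herald_rate U n / n"
    by simp
  have prob: "obb_prob n \<epsilon> = noise_prob n 1 \<epsilon>" for \<epsilon>
    by (simp add: obb_prob_def noise_prob_def fun_eq_iff cong: if_cong)
  have "finite (obb_labels n)" "obb_labels n \<subseteq> extensional {0..<n}" "(\<lambda>_\<in>{0..<n}. 0) \<in> obb_labels n"
    by (auto simp: obb_labels_def finite_PiE PiE_iff)
  from error_rate_noise_expansion[OF U T n this _ _ single] show ?thesis
    unfolding prob by simp
qed

theorem theorem1:
  fixes ns :: "nat list"
  assumes "\<forall>m\<in>set ns. m \<ge> 2"
    and "prod_list ns > 2"
  shows "(\<forall>R::nat. R \<ge> 1 \<longrightarrow>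
           (\<lambda>\<epsilon>::real. error_rate (fourier_tensor ns) (prod_list ns) (urs_labels (prod_list ns) R)
                          (urs_prob (prod_list ns) R \<epsilon>) - \<epsilon> / real (prod_list ns))
             \<in> O[at_right 0](\<lambda>\<epsilon>. \<epsilon>\<^sup>2))
       \<and> (\<lambda>\<epsilon>::real. error_rate (fourier_tensor ns) (prod_list ns) (obb_labels (prod_list ns))
                          (obb_prob (prod_list ns) \<epsilon>) - \<epsilon> / real (prod_list ns))
             \<in> O[at_right 0](\<lambda>\<epsilon>. \<epsilon>\<^sup>2)"
proof -
  have pos: "\<forall>m\<in>set ns. m > 0"
    using assms(1) by fastforce
  have U: "column_phase_transitive (fourier_tensor ns) (prod_list ns)"
    by (rule column_phase_transitive_fourier_tensor[OF pos])
  have T: "ideal_herald_rate (fourier_tensor ns) (prod_list ns) > 0"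
    using ideal_herald_rate_fourier_tensor_pos[OF pos] assms(2) by simp
  have n: "prod_list ns > 0"
    using assms(2) by simp
  show ?thesis
    using error_rate_urs_expansion[OF U T n] error_rate_obb_expansion[OF U T n] by blast
qed

end
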